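(* Fix $p\in(0,1]$ and $t\in(0,1)$. Let $G_n\sim\mathcal G(n,p)$ and, given $G_n$, let $\mathbf X$ be drawn from the Ising model with coupling matrix $A_n(i,j)=\frac{1}{(n-1)p}G_n(i,j)$ and parameters $(\beta,B)$; denote by $\mathbb P^{\mathrm{er}}_{n,\beta,B}$ the joint law of $(\mathbf X,G_n)$ on $\{-1,1\}^n\times\{0,1\}^{\binom n2}$. Let $\Theta_t=\{(\beta,B)\in(0,\infty)^2: t=\tanh(\beta t+B)\}$ and let $\mathbb Q_n$ be the product measure on $\{-1,1\}^n$ with $\mathbb Q_n(X_i=1)=\frac{1+t}{2}=1-\mathbb Q_n(X_i=-1)$. Then for every $(\beta,B)\in\Theta_t$, the sequence $\mathbb Q_n\times\mathcal G(n,p)$ is contiguous with respect to $\mathbb P^{\mathrm{er}}_{n,\beta,B}$: for any events $E_n$, $\mathbb P^{\mathrm{er}}_{n,\beta,B}(E_n)\to0$ implies $(\mathbb Q_n\times\mathcal G(n,p))(E_n)\to0$. Consequently there is no sequence of estimators $(\tilde\beta_n,\tilde B_n)$ (measurable functions of $(\mathbf X,G_n)$) that is consistent for $(\beta,B)$ under $\mathbb P^{\mathrm{er}}_{n,\beta,B}$ for all $(\beta,B)\in\Theta_t$ (and hence none consistent on all of $\Theta=\{\beta>0,B\ne0\}$).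
   Context: $\mathcal G(n,p)$ is the Erdős–Rényi random graph on vertex set $[n]$, each edge present independently with probability $p$; $G_n(i,j)\in\{0,1\}$ is its adjacency indicator ($G_n(i,i)=0$). The Ising model with coupling matrix $A_n$ is $\mathbb P(\mathbf X=\mathbf x)=Z_n^{-1}\exp(\frac{\beta}{2}\mathbf x^\top A_n\mathbf x+B\sum_i x_i)$ on $\{-1,1\}^n$. Note that for $(\beta,B)\in\Theta_t$, $\frac{1+t}{2}=\frac{1}{1+e^{-2(\beta t+B)}}$. An estimator sequence is consistent at $(\beta,B)$ if it converges in $\mathbb P^{\mathrm{er}}_{n,\beta,B}$-probability to $(\beta,B)$. *)

theory Defs
  imports "HOL-Analysis.Analysis"
begin

definition spins :: "nat \<Rightarrow> (nat \<Rightarrow> real) set" where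
  "spins n = ({0..<n} \<rightarrow>\<^sub>E {-1, 1})"

definition edge_slots :: "nat \<Rightarrow> (nat \<times> nat) set" where
  "edge_slots n = {(i, j). i < j \<and> j < n}"

definition adj :: "(nat \<times> nat) set \<Rightarrow> nat \<Rightarrow> nat \<Rightarrow> real" where
  "adj G i j = (if (i, j) \<in> G \<or> (j, i) \<in> G then 1 else 0)"

text \<open>Sample space {-1,1}^n \<times> {0,1}^(n choose 2).\<close>
definition sample_space :: "nat \<Rightarrow> ((nat \<Rightarrow> real) \<times> (nat \<times> nat) set) set" where
  "sample_space n = spins n \<times> Pow (edge_slots n)"

definition er_pmf :: "nat \<Rightarrow> real \<Rightarrow> (nat \<times> nat) set \<Rightarrow> real" where
  "er_pmf n p G = p ^ card G * (1 - p) ^ (card (edge_slots n) - card G)"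

definition coupling :: "nat \<Rightarrow> real \<Rightarrow> (nat \<times> nat) set \<Rightarrow> nat \<Rightarrow> nat \<Rightarrow> real" where
  "coupling n p G i j = adj G i j / ((real n - 1) * p)"

definition ising_energy :: "nat \<Rightarrow> (nat \<Rightarrow> nat \<Rightarrow> real) \<Rightarrow> real \<Rightarrow> real \<Rightarrow> (nat \<Rightarrow> real) \<Rightarrow> real" where
  "ising_energy n A \<beta> B x =
     \<beta> / 2 * (\<Sum>i<n. \<Sum>j<n. x i * A i j * x j) + B * (\<Sum>i<n. x i)"

definition ising_Z :: "nat \<Rightarrow> (nat \<Rightarrow> nat \<Rightarrow> real) \<Rightarrow> real \<Rightarrow> real \<Rightarrow> real" where
  "ising_Z n A \<beta> B = (\<Sum>y\<in>spins n. exp (ising_energy n A \<beta> B y))"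

definition ising_pmf :: "nat \<Rightarrow> (nat \<Rightarrow> nat \<Rightarrow> real) \<Rightarrow> real \<Rightarrow> real \<Rightarrow> (nat \<Rightarrow> real) \<Rightarrow> real" where
  "ising_pmf n A \<beta> B x = exp (ising_energy n A \<beta> B x) / ising_Z n A \<beta> B"

definition P_er_pmf :: "nat \<Rightarrow> real \<Rightarrow> real \<Rightarrow> real \<Rightarrow> (nat \<Rightarrow> real) \<times> (nat \<times> nat) set \<Rightarrow> real" where
  "P_er_pmf n p \<beta> B \<omega> = er_pmf n p (snd \<omega>) * ising_pmf n (coupling n p (snd \<omega>)) \<beta> B (fst \<omega>)"

definition Q_pmf :: "nat \<Rightarrow> real \<Rightarrow> (nat \<Rightarrow> real) \<Rightarrow> real" where
  "Q_pmf n t x = (\<Prod>i<n. if x i = 1 then (1 + t) / 2 else (1 - t) / 2)"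

definition QG_pmf :: "nat \<Rightarrow> real \<Rightarrow> real \<Rightarrow> (nat \<Rightarrow> real) \<times> (nat \<times> nat) set \<Rightarrow> real" where
  "QG_pmf n p t \<omega> = Q_pmf n t (fst \<omega>) * er_pmf n p (snd \<omega>)"

definition prob_of :: "nat \<Rightarrow> ((nat \<Rightarrow> real) \<times> (nat \<times> nat) set \<Rightarrow> real)
    \<Rightarrow> ((nat \<Rightarrow> real) \<times> (nat \<times> nat) set) set \<Rightarrow> real" where
  "prob_of n f E = (\<Sum>\<omega>\<in>E \<inter> sample_space n. f \<omega>)"

definition P_er :: "nat \<Rightarrow> real \<Rightarrow> real \<Rightarrow> real \<Rightarrow> ((nat \<Rightarrow> real) \<times> (nat \<times> nat) set) set \<Rightarrow> real" where
  "P_er n p \<beta> B E = prob_of n (P_er_pmf n p \<beta> B) E"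

definition QG :: "nat \<Rightarrow> real \<Rightarrow> real \<Rightarrow> ((nat \<Rightarrow> real) \<times> (nat \<times> nat) set) set \<Rightarrow> real" where
  "QG n p t E = prob_of n (QG_pmf n p t) E"

definition Theta_t :: "real \<Rightarrow> (real \<times> real) set" where
  "Theta_t t = {(\<beta>, B). \<beta> > 0 \<and> B > 0 \<and> t = tanh (\<beta> * t + B)}"

text \<open>Consistency of an estimator sequence at (beta,B) under P^er: convergence in probability.
  (All functions on the finite discrete sample space are measurable.)\<close>
definition consistent_at ::
  "real \<Rightarrow> (nat \<Rightarrow> (nat \<Rightarrow> real) \<times> (nat \<times> nat) set \<Rightarrow> real \<times> real) \<Rightarrow> real \<Rightarrow> real \<Rightarrow> bool" where
  "consistent_at p est \<beta> B \<longleftrightarrow>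
     (\<forall>\<epsilon>>0. (\<lambda>n. P_er n p \<beta> B {\<omega>. dist (est n \<omega>) (\<beta>, B) > \<epsilon>}) \<longlonglongrightarrow> 0)"

end

theory Submission
  imports Defs
begin

text \<open>Put \<open>\<theta> = \<beta> t + B\<close>, so \<open>t = tanh \<theta>\<close> and \<open>Q\<^sub>n\<close> has weights \<open>exp (\<theta> S) / (2 cosh \<theta>)\<^sup>n\<close>,
  \<open>S\<close> the spin sum. The likelihood ratio of \<open>Q\<^sub>n \<times> G(n,p)\<close> against \<open>P\<^sup>e\<^sup>r\<close> is then
  \<open>exp (-F) \<cdot> Z\<^sub>n(G) / (2 cosh \<theta>)\<^sup>n\<close>, where \<open>F\<close> is the Ising energy minus \<open>\<theta> S\<close>. Averaging
  edge by edge over \<open>G(n,p)\<close>, the means of \<open>exp F\<close> and \<open>exp (-F)\<close> under \<open>Q\<^sub>n \<times> G(n,p)\<close> are at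
  most \<open>exp (-\<beta> n t\<^sup>2/2) E exp (\<gamma> D\<^sup>2/n)\<close> and \<open>exp (\<beta> n t\<^sup>2/2)\<close> up to constants, with
  \<open>D = S - n t\<close>. Under \<open>Q\<^sub>n\<close> the variable \<open>D/\<surd>n\<close> is sub-Gaussian with variance proxy
  \<open>tanh \<theta> / \<theta>\<close>, and \<open>B > 0\<close> leaves room for some \<open>\<gamma> > \<beta>/2\<close> with \<open>E exp (\<gamma> D\<^sup>2/n)\<close> bounded.
  So the product of the two means is bounded, and Markov's inequality applied to both factors
  gives \<open>(Q\<^sub>n \<times> G(n,p)) E \<le> K P\<^sup>e\<^sup>r E + O(1/\<surd>K)\<close>: contiguity. All points of \<open>\<Theta>\<^sub>t\<close> share the
  same \<open>Q\<^sub>n\<close>, so an estimator consistent at two of them would, under \<open>Q\<^sub>n \<times> G(n,p)\<close>,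
  concentrate near two different values.\<close>

lemma sinh_ge_self:
  fixes x :: real assumes "0 \<le> x" shows "x \<le> sinh x"
proof -
  have "(\<lambda>y. sinh y - y) 0 \<le> (\<lambda>y. sinh y - y) x"
    by (rule DERIV_nonneg_imp_nondecreasing[OF assms])
       (auto intro!: exI derivative_eq_intros simp: cosh_real_ge_1)
  then show ?thesis by simp
qed

lemma one_minus_tanh_square: "1 - tanh x ^ 2 = 1 / cosh x ^ 2" for x :: real
proof -
  have "1 - tanh x ^ 2 = (cosh x ^ 2 - sinh x ^ 2) / cosh x ^ 2"
    by (simp add: tanh_def power_divide diff_divide_distrib)
  then show ?thesis by (simp add: cosh_square_eq)
qed

lemma mult_one_minus_tanh_square_le:
  fixes v :: real assumes "0 \<le> v" shows "v * (1 - tanh v ^ 2) \<le> tanh v"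
proof -
  have "sinh v \<le> sinh v * cosh v"
    using assms cosh_real_ge_1[of v] by (metis mult_left_mono mult.right_neutral sinh_real_nonneg_iff)
  then have "v / cosh v ^ 2 \<le> sinh v * cosh v / cosh v ^ 2"
    using sinh_ge_self[OF assms] by (simp add: divide_right_mono)
  also have "\<dots> = tanh v" by (simp add: tanh_def power2_eq_square)
  finally show ?thesis by (simp add: one_minus_tanh_square)
qed

lemma tanh_div_self_antimono:
  fixes u v :: real assumes "0 < u" "u \<le> v"
  shows "tanh v / v \<le> tanh u / u"
proof (rule DERIV_nonpos_imp_nonincreasing[OF assms(2), where f = "\<lambda>v. tanh v / v"])
  fix x assume "u \<le> x" "x \<le> v"
  then have "x > 0" using assms by simp
  then have "DERIV (\<lambda>v. tanh v / v) x :> ((1 - tanh x ^ 2) * x - tanh x * 1) / (x * x)"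
    and "((1 - tanh x ^ 2) * x - tanh x * 1) / (x * x) \<le> 0"
    using mult_one_minus_tanh_square_le[of x]
    by (auto intro!: derivative_eq_intros divide_nonpos_pos simp: algebra_simps)
  then show "\<exists>y. DERIV (\<lambda>v. tanh v / v) x :> y \<and> y \<le> 0" by blast
qed

lemma tanh_ge_chord:
  fixes u v :: real assumes "0 \<le> u" "u \<le> v" "0 < v"
  shows "u * (tanh v / v) \<le> tanh u"
proof (cases "u = 0")
  case False
  then have "u > 0" using assms by simp
  then have "u * (tanh v / v) \<le> u * (tanh u / u)"
    using tanh_div_self_antimono[OF _ assms(2)] by (intro mult_left_mono) auto
  with \<open>u > 0\<close> show ?thesis by simp
qed simp

lemma tanh_increment_le_tangent:
  fixes x y :: real assumes "0 \<le> x" "0 \<le> y"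
  shows "tanh (x + y) - tanh x \<le> (1 - tanh x ^ 2) * y"
proof -
  let ?f = "\<lambda>y. (1 - tanh x ^ 2) * y - tanh (x + y)"
  have "?f 0 \<le> ?f y"
  proof (rule DERIV_nonneg_imp_nondecreasing[OF assms(2)])
    fix z :: real assume "0 \<le> z" "z \<le> y"
    then have "tanh x ^ 2 \<le> tanh (x + z) ^ 2"
      using assms by (intro power_mono) auto
    moreover have "DERIV ?f z :> (1 - tanh x ^ 2) * 1 - (1 - tanh (x + z) ^ 2) * (0 + 1)"
      by (auto intro!: derivative_eq_intros)
    ultimately show "\<exists>d. DERIV ?f z :> d \<and> d \<ge> 0" by force
  qed
  then show ?thesis by simp
qed

text \<open>The log-moment generating function of a \<open>\<plusminus>1\<close> spin of mean \<open>tanh \<theta>\<close> is sub-Gaussian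
  with variance proxy \<open>tanh \<theta> / \<theta>\<close> on the half-line \<open>s \<ge> -\<theta>\<close>; compare the derivatives of both
  sides, using the tangent bound for \<open>s \<ge> 0\<close> and the chord bound for \<open>s \<le> 0\<close>.\<close>
lemma ln_cosh_ratio_le:
  fixes \<theta> s :: real assumes "0 < \<theta>" "- \<theta> \<le> s"
  shows "ln (cosh (\<theta> + s) / cosh \<theta>) - s * tanh \<theta> \<le> (tanh \<theta> / \<theta>) * s^2 / 2"
proof -
  define \<kappa> where "\<kappa> = tanh \<theta> / \<theta>"
  have kap: "1 - tanh \<theta> ^ 2 \<le> \<kappa>"
    using mult_one_minus_tanh_square_le[of \<theta>] assms(1) by (simp add: \<kappa>_def field_simps)
  define k where "k = (\<lambda>s. \<kappa> * s^2 / 2 - ln (cosh (\<theta> + s)) + ln (cosh \<theta>) + s * tanh \<theta>)"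
  have dk: "DERIV k x :> \<kappa> * x - tanh (\<theta> + x) + tanh \<theta>" for x
  proof -
    have "DERIV k x :> \<kappa> * (real 2 * x ^ (2 - 1) * 1) / 2 - sinh (\<theta> + x) * (0 + 1) / cosh (\<theta> + x)
                       + 0 + 1 * tanh \<theta>"
      unfolding k_def by (auto intro!: derivative_eq_intros)
    then show ?thesis by (simp add: tanh_def)
  qed
  have "k 0 \<le> k s"
  proof (cases "0 \<le> s")
    case True
    show ?thesis
    proof (rule DERIV_nonneg_imp_nondecreasing[OF True])
      fix x assume x: "0 \<le> x" "x \<le> s"
      have "tanh (\<theta> + x) - tanh \<theta> \<le> (1 - tanh \<theta> ^ 2) * x"
        using tanh_increment_le_tangent[of \<theta> x] assms x by simp
      also have "\<dots> \<le> \<kappa> * x" using kap x by (simp add: mult_right_mono)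
      finally show "\<exists>y. DERIV k x :> y \<and> y \<ge> 0" using dk by force
    qed
  next
    case False
    show ?thesis
    proof (rule DERIV_nonpos_imp_nonincreasing[of s 0 k])
      fix x assume x: "s \<le> x" "x \<le> 0"
      have "(\<theta> + x) * \<kappa> \<le> tanh (\<theta> + x)"
        using tanh_ge_chord[of "\<theta> + x" \<theta>] assms x by (simp add: \<kappa>_def)
      moreover have "(\<theta> + x) * \<kappa> = tanh \<theta> + \<kappa> * x" using assms by (simp add: \<kappa>_def field_simps)
      ultimately show "\<exists>y. DERIV k x :> y \<and> y \<le> 0" using dk by force
    qed (use False in simp)
  qed
  then show ?thesis by (simp add: k_def \<kappa>_def ln_div algebra_simps)
qed

lemma exp_le_one_plus_self_plus_square:
  fixes u :: real assumes "\<bar>u\<bar> \<le> 1" shows "exp u \<le> 1 + u + u^2"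
proof (cases "0 \<le> u")
  case True then show ?thesis using exp_bound[of u] assms by simp
next
  case False
  then have "exp u \<le> 1 / (1 - u)"
    using exp_ge_add_one_self[of "-u"] by (simp add: exp_minus field_simps)
  also have "\<dots> \<le> 1 + u + u^2"
  proof -
    have "(1 - u) * (1 + u + u^2) = 1 - u^3" by (simp add: algebra_simps power2_eq_square power3_eq_cube)
    moreover have "u^3 \<le> 0" using False by (simp add: odd_power_less_zero less_imp_le)
    ultimately show ?thesis using False by (simp add: divide_le_eq mult.commute)
  qed
  finally show ?thesis .
qed

lemma bernoulli_mgf_le:
  fixes u p :: real assumes "\<bar>u\<bar> \<le> 1" "0 \<le> p"
  shows "p * exp u + (1 - p) \<le> exp (p * u + p * u^2)"
proof -
  have "p * exp u + (1 - p) = 1 + p * (exp u - 1)" by (simp add: algebra_simps)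
  also have "\<dots> \<le> 1 + p * (u + u^2)"
    using exp_le_one_plus_self_plus_square[OF assms(1)] assms(2) by (intro add_left_mono mult_left_mono) auto
  also have "\<dots> \<le> exp (p * u + p * u^2)"
    using exp_ge_add_one_self[of "p * (u + u^2)"] by (simp add: algebra_simps)
  finally show ?thesis .
qed

lemma sum_Un_le:
  fixes f :: "'a \<Rightarrow> real"
  assumes "finite A" "finite B" "\<And>x. x \<in> A \<union> B \<Longrightarrow> 0 \<le> f x"
  shows "sum f (A \<union> B) \<le> sum f A + sum f B"
  using sum_Un[OF assms(1,2), of f] sum_nonneg[of "A \<inter> B" f] assms(3) by force

lemma markov_sum:
  fixes w f :: "'a \<Rightarrow> real"
  assumes "finite A" "\<And>x. x \<in> A \<Longrightarrow> 0 \<le> w x" "\<And>x. x \<in> A \<Longrightarrow> 0 \<le> f x" "0 < c"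
  shows "(\<Sum>x\<in>{x\<in>A. c < f x}. w x) \<le> (\<Sum>x\<in>A. w x * f x) / c"
proof -
  have "(\<Sum>x\<in>{x\<in>A. c < f x}. w x) \<le> (\<Sum>x\<in>{x\<in>A. c < f x}. w x * f x / c)"
  proof (intro sum_mono)
    fix x assume x: "x \<in> {x\<in>A. c < f x}"
    then have "w x * 1 \<le> w x * (f x / c)" using assms by (intro mult_left_mono) auto
    then show "w x \<le> w x * f x / c" by simp
  qed
  also have "\<dots> \<le> (\<Sum>x\<in>A. w x * f x / c)"
    using assms by (intro sum_mono2) auto
  finally show ?thesis by (simp add: sum_divide_distrib)
qed

lemma chernoff_sum:
  fixes w g :: "'a \<Rightarrow> real"
  assumes "finite A" "\<And>x. x \<in> A \<Longrightarrow> 0 \<le> w x"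
  shows "(\<Sum>x\<in>{x\<in>A. c \<le> g x}. w x) \<le> (\<Sum>x\<in>A. w x * exp (g x - c))"
proof -
  have "(\<Sum>x\<in>{x\<in>A. c \<le> g x}. w x) \<le> (\<Sum>x\<in>{x\<in>A. c \<le> g x}. w x * exp (g x - c))"
  proof (intro sum_mono)
    fix x assume "x \<in> {x\<in>A. c \<le> g x}"
    then have "w x \<ge> 0" "1 \<le> exp (g x - c)" using assms by auto
    then show "w x \<le> w x * exp (g x - c)" by (metis mult_left_mono mult.right_neutral)
  qed
  also have "\<dots> \<le> (\<Sum>x\<in>A. w x * exp (g x - c))"
    using assms by (intro sum_mono2) auto
  finally show ?thesis .
qed

lemma geometric_sum_le:
  fixes q :: real assumes "0 \<le> q" "q < 1" shows "(\<Sum>k<m. q ^ k) \<le> 1 / (1 - q)"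
  using assms sum_gp_strict[of q m] by (simp add: divide_right_mono)

definition spin_sum :: "nat \<Rightarrow> (nat \<Rightarrow> real) \<Rightarrow> real" where
  "spin_sum n x = (\<Sum>i<n. x i)"

lemma finite_spins [simp]: "finite (spins n)"
  by (simp add: spins_def finite_PiE)

lemma spins_value: "x \<in> spins n \<Longrightarrow> i < n \<Longrightarrow> x i = -1 \<or> x i = 1"
  by (auto simp: spins_def PiE_def Pi_def)

lemma abs_spin_sum_le: assumes "x \<in> spins n" shows "\<bar>spin_sum n x\<bar> \<le> real n"
proof -
  have "\<bar>spin_sum n x\<bar> \<le> (\<Sum>i<n. \<bar>x i\<bar>)" unfolding spin_sum_def by (rule sum_abs)
  also have "\<dots> = (\<Sum>i<n. 1)" using spins_value[OF assms] by (intro sum.cong refl) force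
  finally show ?thesis by simp
qed

lemma sum_spins_prod:
  fixes f :: "nat \<Rightarrow> real \<Rightarrow> real"
  shows "(\<Sum>x\<in>spins n. \<Prod>i<n. f i (x i)) = (\<Prod>i<n. f i (-1) + f i 1)"
  using prod_sum_PiE[of "{0..<n}" "\<lambda>_. {-1, 1::real}" f]
  by (simp add: spins_def atLeast0LessThan)

lemma sum_spins_exp_spin_sum: "(\<Sum>x\<in>spins n. exp (a * spin_sum n x)) = (2 * cosh a) ^ n"
proof -
  have "(\<Sum>x\<in>spins n. exp (a * spin_sum n x)) = (\<Sum>x\<in>spins n. \<Prod>i<n. exp (a * x i))"
    by (simp add: spin_sum_def sum_distrib_left exp_sum)
  also have "\<dots> = (\<Prod>i<n. exp (a * -1) + exp (a * 1))" by (rule sum_spins_prod)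
  also have "exp (a * -1) + exp (a * 1) = 2 * cosh a" by (simp add: cosh_field_def)
  finally show ?thesis by simp
qed

definition flip :: "nat \<Rightarrow> (nat \<Rightarrow> real) \<Rightarrow> nat \<Rightarrow> real" where
  "flip n x = (\<lambda>i. if i < n then - x i else undefined)"

lemma flip_spins: "x \<in> spins n \<Longrightarrow> flip n x \<in> spins n"
  by (auto simp: spins_def flip_def PiE_def Pi_def extensional_def)

lemma flip_flip: "x \<in> spins n \<Longrightarrow> flip n (flip n x) = x"
  by (auto simp: spins_def flip_def PiE_def extensional_def fun_eq_iff)

lemma spin_sum_flip: "spin_sum n (flip n x) = - spin_sum n x"
  by (simp add: spin_sum_def flip_def sum_negf)

lemma Q_pmf_nonneg: "\<bar>t\<bar> \<le> 1 \<Longrightarrow> 0 \<le> Q_pmf n t x"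
  unfolding Q_pmf_def by (intro prod_nonneg) auto

lemma Q_pmf_tanh:
  assumes "x \<in> spins n"
  shows "Q_pmf n (tanh \<theta>) x = exp (\<theta> * spin_sum n x) / (2 * cosh \<theta>) ^ n"
proof -
  have "(1 + tanh \<theta>) / 2 = exp \<theta> / (2 * cosh \<theta>)" "(1 - tanh \<theta>) / 2 = exp (-\<theta>) / (2 * cosh \<theta>)"
    by (simp_all add: tanh_def field_simps flip: cosh_plus_sinh cosh_minus_sinh)
  then have "(if x i = 1 then (1 + tanh \<theta>) / 2 else (1 - tanh \<theta>) / 2) = exp (\<theta> * x i) / (2 * cosh \<theta>)"
    if "i < n" for i
    using spins_value[OF assms that] by auto
  then have "Q_pmf n (tanh \<theta>) x = (\<Prod>i<n. exp (\<theta> * x i) / (2 * cosh \<theta>))"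
    unfolding Q_pmf_def by (intro prod.cong) auto
  then show ?thesis by (simp add: prod_dividef spin_sum_def sum_distrib_left exp_sum)
qed

lemma Q_pmf_mgf:
  "(\<Sum>x\<in>spins n. Q_pmf n (tanh \<theta>) x * exp (s * spin_sum n x)) = (cosh (\<theta> + s) / cosh \<theta>) ^ n"
proof -
  have "(\<Sum>x\<in>spins n. Q_pmf n (tanh \<theta>) x * exp (s * spin_sum n x))
      = (\<Sum>x\<in>spins n. exp ((\<theta> + s) * spin_sum n x) / (2 * cosh \<theta>) ^ n)"
    by (intro sum.cong refl) (simp add: Q_pmf_tanh distrib_right exp_add)
  also have "\<dots> = (2 * cosh (\<theta> + s)) ^ n / (2 * cosh \<theta>) ^ n"
    by (simp add: sum_divide_distrib[symmetric] sum_spins_exp_spin_sum)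
  finally show ?thesis by (simp add: power_divide)
qed

lemma sum_Q_pmf: "(\<Sum>x\<in>spins n. Q_pmf n (tanh \<theta>) x) = 1"
  using Q_pmf_mgf[of n \<theta> 0] by simp

lemma Q_pmf_flip:
  assumes "x \<in> spins n"
  shows "Q_pmf n (tanh \<theta>) (flip n x) = Q_pmf n (tanh \<theta>) x * exp (- 2 * \<theta> * spin_sum n x)"
  using Q_pmf_tanh[OF assms, of \<theta>] Q_pmf_tanh[OF flip_spins[OF assms], of \<theta>]
  by (simp add: spin_sum_flip exp_add[symmetric] algebra_simps)

lemma tanh_surj_unit_interval:
  fixes t :: real assumes "0 < t" "t < 1"
  obtains \<theta> where "0 < \<theta>" "tanh \<theta> = t"
proof
  define \<theta> where "\<theta> = ln ((1 + t) / (1 - t)) / 2"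
  have q: "1 < (1 + t) / (1 - t)" using assms by (simp add: field_simps)
  then show "0 < \<theta>" by (simp add: \<theta>_def)
  have "exp (- (2 * \<theta>)) = (1 - t) / (1 + t)"
    using q by (simp add: \<theta>_def exp_minus)
  then have "tanh \<theta> = (1 - (1 - t) / (1 + t)) / (1 + (1 - t) / (1 + t))"
    unfolding tanh_real_altdef[of \<theta>] by (simp only: mult_minus_left)
  also have "\<dots> = t" using assms by (simp add: field_simps)
  finally show "tanh \<theta> = t" .
qed

locale tilted_spins =
  fixes \<theta> t :: real
  assumes theta_pos: "0 < \<theta>" and t_eq: "t = tanh \<theta>"
begin

definition \<kappa> :: real where "\<kappa> = t / \<theta>"

definition deviation :: "nat \<Rightarrow> (nat \<Rightarrow> real) \<Rightarrow> real" where
  "deviation n x = spin_sum n x - real n * t"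

lemma t_pos: "0 < t" using theta_pos t_eq by simp
lemma t_less_one: "t < 1" using t_eq tanh_real_lt_1 by simp
lemma kappa_pos: "0 < \<kappa>" using t_pos theta_pos by (simp add: \<kappa>_def)

lemma kappa_theta: "\<kappa> * \<theta> = t" using theta_pos by (simp add: \<kappa>_def)

lemma Q_nonneg: "0 \<le> Q_pmf n t x"
  using t_pos t_less_one by (intro Q_pmf_nonneg) auto

lemma Q_pmf_eq: "x \<in> spins n \<Longrightarrow> Q_pmf n t x = exp (\<theta> * spin_sum n x) / (2 * cosh \<theta>) ^ n"
  using Q_pmf_tanh[of x n \<theta>] by (simp add: t_eq)

lemma sum_Q: "(\<Sum>x\<in>spins n. Q_pmf n t x) = 1"
  using sum_Q_pmf[of n \<theta>] by (simp add: t_eq)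

lemma mgf_deviation_le:
  assumes "- \<theta> \<le> s"
  shows "(\<Sum>x\<in>spins n. Q_pmf n t x * exp (s * deviation n x)) \<le> exp (real n * (\<kappa> * s^2 / 2))"
proof -
  have "(\<Sum>x\<in>spins n. Q_pmf n t x * exp (s * deviation n x))
      = (\<Sum>x\<in>spins n. Q_pmf n t x * exp (s * spin_sum n x)) * exp (- s * real n * t)"
    unfolding sum_distrib_right
    by (intro sum.cong refl) (simp add: deviation_def algebra_simps flip: exp_add)
  also have "\<dots> = exp (real n * (ln (cosh (\<theta> + s) / cosh \<theta>) - s * t))"
  proof -
    have "(cosh (\<theta> + s) / cosh \<theta>) ^ n = exp (real n * ln (cosh (\<theta> + s) / cosh \<theta>))"
      by (simp add: exp_of_nat_mult)
    then show ?thesis by (simp add: t_eq Q_pmf_mgf algebra_simps flip: exp_add)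
  qed
  also have "\<dots> \<le> exp (real n * (\<kappa> * s^2 / 2))"
  proof -
    have "ln (cosh (\<theta> + s) / cosh \<theta>) - s * t \<le> \<kappa> * s^2 / 2"
      using ln_cosh_ratio_le[OF theta_pos assms, folded t_eq] by (simp add: \<kappa>_def)
    then show ?thesis by (simp add: mult_left_mono del: times_divide_eq_right)
  qed
  finally show ?thesis .
qed

lemma chernoff_deviation:
  assumes "- \<theta> \<le> s"
  shows "(\<Sum>x\<in>{x\<in>spins n. c \<le> s * deviation n x}. Q_pmf n t x) \<le> exp (real n * (\<kappa> * s^2 / 2) - c)"
proof -
  have "(\<Sum>x\<in>{x\<in>spins n. c \<le> s * deviation n x}. Q_pmf n t x)
      \<le> (\<Sum>x\<in>spins n. Q_pmf n t x * exp (s * deviation n x)) * exp (- c)"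
    using chernoff_sum[of "spins n" "Q_pmf n t" c "\<lambda>x. s * deviation n x"]
    by (simp add: Q_nonneg sum_distrib_right mult.assoc exp_diff exp_minus divide_inverse)
  also have "\<dots> \<le> exp (real n * (\<kappa> * s^2 / 2)) * exp (- c)"
    using mgf_deviation_le[OF assms] by (intro mult_right_mono) auto
  also have "\<dots> = exp (real n * (\<kappa> * s^2 / 2) - c)" by (simp add: exp_add[symmetric])
  finally show ?thesis .
qed

lemma upper_tail_le:
  assumes "0 \<le> u" "0 < n"
  shows "(\<Sum>x\<in>{x\<in>spins n. u \<le> deviation n x}. Q_pmf n t x) \<le> exp (- (u^2) / (2 * \<kappa> * real n))"
proof -
  define s where "s = u / (\<kappa> * real n)"
  have "s \<ge> 0" using assms kappa_pos by (simp add: s_def)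
  then have "{x\<in>spins n. u \<le> deviation n x} \<subseteq> {x\<in>spins n. s * u \<le> s * deviation n x}"
    by (auto intro: mult_left_mono)
  then have "(\<Sum>x\<in>{x\<in>spins n. u \<le> deviation n x}. Q_pmf n t x)
          \<le> (\<Sum>x\<in>{x\<in>spins n. s * u \<le> s * deviation n x}. Q_pmf n t x)"
    by (intro sum_mono2) (auto simp: Q_nonneg)
  also have "\<dots> \<le> exp (real n * (\<kappa> * s^2 / 2) - s * u)"
    using \<open>s \<ge> 0\<close> theta_pos by (intro chernoff_deviation) auto
  also have "real n * (\<kappa> * s^2 / 2) - s * u = - (u^2) / (2 * \<kappa> * real n)"
    using assms kappa_pos by (simp add: s_def field_simps power2_eq_square)
  finally show ?thesis .
qed

text \<open>The restriction \<open>u \<le> n t\<close> comes from the range \<open>s \<ge> -\<theta>\<close> of the moment bound.\<close>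
lemma lower_tail_le:
  assumes "0 \<le> u" "0 < n" "u \<le> real n * t"
  shows "(\<Sum>x\<in>{x\<in>spins n. deviation n x \<le> - u}. Q_pmf n t x) \<le> exp (- (u^2) / (2 * \<kappa> * real n))"
proof -
  define s where "s = - u / (\<kappa> * real n)"
  have "s \<le> 0" using assms kappa_pos by (simp add: s_def divide_nonneg_pos)
  have "u / (\<kappa> * real n) \<le> real n * t / (\<kappa> * real n)"
    using assms kappa_pos by (intro divide_right_mono) auto
  also have "\<dots> = \<theta>" using assms kappa_pos theta_pos by (simp add: \<kappa>_def field_simps)
  finally have "- \<theta> \<le> s" by (simp add: s_def)
  have "{x\<in>spins n. deviation n x \<le> - u} \<subseteq> {x\<in>spins n. s * (- u) \<le> s * deviation n x}"
    using \<open>s \<le> 0\<close> mult_left_mono_neg[of _ "- u" s] by auto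
  then have "(\<Sum>x\<in>{x\<in>spins n. deviation n x \<le> - u}. Q_pmf n t x)
          \<le> (\<Sum>x\<in>{x\<in>spins n. s * (- u) \<le> s * deviation n x}. Q_pmf n t x)"
    by (intro sum_mono2) (auto simp: Q_nonneg)
  also have "\<dots> \<le> exp (real n * (\<kappa> * s^2 / 2) - s * (- u))"
    by (rule chernoff_deviation[OF \<open>- \<theta> \<le> s\<close>])
  also have "real n * (\<kappa> * s^2 / 2) - s * (- u) = - (u^2) / (2 * \<kappa> * real n)"
    using assms kappa_pos by (simp add: s_def field_simps power2_eq_square)
  finally show ?thesis .
qed

end

context tilted_spins
begin

text \<open>Flipping all spins multiplies \<open>Q\<^sub>n\<close> by \<open>exp (-2\<theta>S)\<close>; on \<open>S \<ge> 0\<close> this outweighs the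
  growth of \<open>\<gamma> D\<^sup>2/n\<close> as long as \<open>2\<gamma>t \<le> \<theta>\<close>.\<close>
lemma Q_exp_quad_flip_le:
  assumes "2 * \<gamma> * \<kappa> \<le> 1" "0 < n" "y \<in> spins n" "0 \<le> spin_sum n y"
  shows "Q_pmf n t (flip n y) * exp (\<gamma> * (deviation n (flip n y))^2 / real n)
         \<le> Q_pmf n t y * exp (\<gamma> * (deviation n y)^2 / real n)"
proof -
  have "2 * \<gamma> * t = (2 * \<gamma> * \<kappa>) * \<theta>" using kappa_theta by (simp add: algebra_simps)
  also have "\<dots> \<le> \<theta>" using assms(1) theta_pos by (simp add: mult_left_le_one_le)
  finally have "0 \<le> 2 * spin_sum n y * (\<theta> - 2 * \<gamma> * t)" using assms(4) by simp
  also have "2 * spin_sum n y * (\<theta> - 2 * \<gamma> * t)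
             = \<gamma> * (deviation n y)^2 / real n + 2 * \<theta> * spin_sum n y - \<gamma> * (deviation n (flip n y))^2 / real n"
    using assms(2) by (simp add: deviation_def spin_sum_flip field_simps power2_eq_square)
  finally have "exp (- 2 * \<theta> * spin_sum n y + \<gamma> * (deviation n (flip n y))^2 / real n)
                \<le> exp (\<gamma> * (deviation n y)^2 / real n)"
    by simp
  then show ?thesis
    using Q_nonneg[of n y] unfolding Q_pmf_flip[OF assms(3), of \<theta>, folded t_eq]
    by (simp add: mult.assoc mult_left_mono flip: exp_add)
qed

lemma moment_le_twice_nonneg_part:
  assumes "2 * \<gamma> * \<kappa> \<le> 1" "0 < n"
  shows "(\<Sum>x\<in>spins n. Q_pmf n t x * exp (\<gamma> * (deviation n x)^2 / real n))
         \<le> 2 * (\<Sum>x\<in>{x\<in>spins n. 0 \<le> spin_sum n x}. Q_pmf n t x * exp (\<gamma> * (deviation n x)^2 / real n))"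
proof -
  define g where "g x = Q_pmf n t x * exp (\<gamma> * (deviation n x)^2 / real n)" for x
  have "sum g (spins n) = sum g {x\<in>spins n. 0 \<le> spin_sum n x} + sum g {x\<in>spins n. spin_sum n x < 0}"
    by (subst sum.union_disjoint[symmetric]) (auto intro: sum.cong)
  also have "sum g {x\<in>spins n. spin_sum n x < 0} = sum (\<lambda>y. g (flip n y)) {y\<in>spins n. 0 < spin_sum n y}"
    by (rule sum.reindex_bij_witness[where i = "flip n" and j = "flip n"])
       (auto simp: flip_flip flip_spins spin_sum_flip)
  also have "\<dots> \<le> sum g {y\<in>spins n. 0 < spin_sum n y}"
    unfolding g_def using assms by (intro sum_mono Q_exp_quad_flip_le) auto
  also have "\<dots> \<le> sum g {x\<in>spins n. 0 \<le> spin_sum n x}"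
    by (intro sum_mono2) (auto simp: g_def Q_nonneg)
  finally show ?thesis unfolding g_def by simp
qed

lemma abs_deviation_le: assumes "x \<in> spins n" shows "\<bar>deviation n x\<bar> \<le> 2 * real n"
proof -
  have "\<bar>deviation n x\<bar> \<le> \<bar>spin_sum n x\<bar> + real n * t"
    using t_pos abs_triangle_ineq4[of "spin_sum n x" "real n * t"] by (simp add: deviation_def)
  moreover have "real n * t \<le> real n" using t_less_one t_pos by (simp add: mult_left_le)
  ultimately show ?thesis using abs_spin_sum_le[OF assms] by linarith
qed

lemma exp_quad_le_shell_sum:
  assumes "x \<in> spins n" "0 < n" "0 \<le> \<gamma>"
  shows "exp (\<gamma> * (deviation n x)^2 / real n)
         \<le> (\<Sum>k<2*n+1. exp (\<gamma> * (real k + 1)^2) * of_bool (real k * sqrt (real n) \<le> \<bar>deviation n x\<bar>))"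
proof -
  define a where "a = \<bar>deviation n x\<bar> / sqrt (real n)"
  define k where "k = nat \<lfloor>a\<rfloor>"
  have sq: "sqrt (real n) \<ge> 1" using assms by simp
  have a: "0 \<le> a" "real k \<le> a" "a < real k + 1" by (simp_all add: a_def k_def)
  have "a \<le> \<bar>deviation n x\<bar> / 1" unfolding a_def using sq by (intro divide_left_mono) auto
  then have "k < 2*n+1" using a abs_deviation_le[OF assms(1)] by linarith
  have "real k * sqrt (real n) \<le> a * sqrt (real n)" using a by (intro mult_right_mono) auto
  then have shell: "real k * sqrt (real n) \<le> \<bar>deviation n x\<bar>" using sq by (simp add: a_def)
  have "\<gamma> * (deviation n x)^2 / real n = \<gamma> * a^2"
    using assms by (simp add: a_def power_divide)
  also have "\<dots> \<le> \<gamma> * (real k + 1)^2"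
    using a assms(3) by (intro mult_left_mono power_mono) auto
  finally have "exp (\<gamma> * (deviation n x)^2 / real n)
      \<le> exp (\<gamma> * (real k + 1)^2) * of_bool (real k * sqrt (real n) \<le> \<bar>deviation n x\<bar>)"
    using shell by simp
  also have "\<dots> \<le> (\<Sum>k<2*n+1. exp (\<gamma> * (real k + 1)^2) * of_bool (real k * sqrt (real n) \<le> \<bar>deviation n x\<bar>))"
    using \<open>k < 2*n+1\<close> by (intro member_le_sum) auto
  finally show ?thesis .
qed

text \<open>On \<open>S \<ge> 0\<close> we have \<open>D \<ge> -n t\<close>, so only lower deviations in the range of
  \<open>lower_tail_le\<close> occur.\<close>
lemma nonneg_shell_prob_le:
  assumes "0 < n"
  shows "(\<Sum>x\<in>{x\<in>spins n. 0 \<le> spin_sum n x \<and> real k * sqrt (real n) \<le> \<bar>deviation n x\<bar>}. Q_pmf n t x)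
         \<le> 2 * exp (- (real k^2) / (2 * \<kappa>))"
proof -
  define u where "u = real k * sqrt (real n)"
  define U where "U = {x\<in>spins n. u \<le> deviation n x}"
  define L where "L = {x\<in>spins n. 0 \<le> spin_sum n x \<and> deviation n x \<le> - u}"
  have u: "0 \<le> u" "- (u^2) / (2 * \<kappa> * real n) = - (real k^2) / (2 * \<kappa>)"
    using assms kappa_pos by (simp_all add: u_def power_mult_distrib)
  have U: "(\<Sum>x\<in>U. Q_pmf n t x) \<le> exp (- (real k^2) / (2 * \<kappa>))"
    using upper_tail_le[OF u(1) assms] u(2) by (simp add: U_def)
  have L: "(\<Sum>x\<in>L. Q_pmf n t x) \<le> exp (- (real k^2) / (2 * \<kappa>))"
  proof (cases "u \<le> real n * t")
    case True
    have "(\<Sum>x\<in>L. Q_pmf n t x) \<le> (\<Sum>x\<in>{x\<in>spins n. deviation n x \<le> - u}. Q_pmf n t x)"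
      by (intro sum_mono2) (auto simp: L_def Q_nonneg)
    also have "\<dots> \<le> exp (- (real k^2) / (2 * \<kappa>))" using lower_tail_le[OF u(1) assms True] u(2) by simp
    finally show ?thesis .
  next
    case False
    then have "L = {}" by (auto simp: L_def deviation_def)
    then show ?thesis by simp
  qed
  have "(\<Sum>x\<in>{x\<in>spins n. 0 \<le> spin_sum n x \<and> u \<le> \<bar>deviation n x\<bar>}. Q_pmf n t x) \<le> (\<Sum>x\<in>U \<union> L. Q_pmf n t x)"
    by (intro sum_mono2) (auto simp: U_def L_def Q_nonneg)
  also have "\<dots> \<le> (\<Sum>x\<in>U. Q_pmf n t x) + (\<Sum>x\<in>L. Q_pmf n t x)"
    by (rule sum_Un_le) (auto simp: U_def L_def Q_nonneg)
  finally show ?thesis using U L unfolding u_def by linarith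
qed

lemma nonneg_part_moment_le_shell_sum:
  assumes "0 \<le> \<gamma>" "0 < n"
  shows "(\<Sum>x\<in>{x\<in>spins n. 0 \<le> spin_sum n x}. Q_pmf n t x * exp (\<gamma> * (deviation n x)^2 / real n))
     \<le> (\<Sum>k<2*n+1. exp (\<gamma> * (real k + 1)^2) * (2 * exp (- (real k^2) / (2 * \<kappa>))))"
proof -
  define P where "P = {x\<in>spins n. 0 \<le> spin_sum n x}"
  define shell where "shell k = P \<inter> {x. real k * sqrt (real n) \<le> \<bar>deviation n x\<bar>}" for k :: nat
  have "(\<Sum>x\<in>P. Q_pmf n t x * exp (\<gamma> * (deviation n x)^2 / real n))
     \<le> (\<Sum>x\<in>P. Q_pmf n t x * (\<Sum>k<2*n+1. exp (\<gamma> * (real k + 1)^2)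
                                     * of_bool (real k * sqrt (real n) \<le> \<bar>deviation n x\<bar>)))"
    using assms by (intro sum_mono mult_left_mono exp_quad_le_shell_sum) (auto simp: P_def Q_nonneg)
  also have "\<dots> = (\<Sum>k<2*n+1. exp (\<gamma> * (real k + 1)^2)
                     * (\<Sum>x\<in>P. Q_pmf n t x * of_bool (real k * sqrt (real n) \<le> \<bar>deviation n x\<bar>)))"
    unfolding sum_distrib_left by (subst sum.swap) (simp add: mult_ac)
  also have "\<dots> = (\<Sum>k<2*n+1. exp (\<gamma> * (real k + 1)^2) * (\<Sum>x\<in>shell k. Q_pmf n t x))"
    by (simp add: shell_def P_def)
  also have "\<dots> \<le> (\<Sum>k<2*n+1. exp (\<gamma> * (real k + 1)^2) * (2 * exp (- (real k^2) / (2 * \<kappa>))))"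
  proof (intro sum_mono mult_left_mono)
    fix k
    have "shell k = {x\<in>spins n. 0 \<le> spin_sum n x \<and> real k * sqrt (real n) \<le> \<bar>deviation n x\<bar>}"
      by (auto simp: shell_def P_def)
    then show "(\<Sum>x\<in>shell k. Q_pmf n t x) \<le> 2 * exp (- (real k^2) / (2 * \<kappa>))"
      using nonneg_shell_prob_le[OF assms(2)] by simp
  qed simp
  finally show ?thesis by (simp add: P_def)
qed

text \<open>\<open>shell_const \<gamma>\<close> is the maximum over real \<open>k\<close> of \<open>\<gamma> (k+1)\<^sup>2 - k\<^sup>2/(2\<kappa>) + k\<close>.\<close>
definition shell_const :: "real \<Rightarrow> real" where
  "shell_const \<gamma> = (2*\<gamma>+1)^2 / (4 * (1 / (2*\<kappa>) - \<gamma>)) + \<gamma>"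

lemma shell_exponent_le:
  assumes "2 * \<gamma> * \<kappa> < 1"
  shows "\<gamma> * (real k + 1)^2 - real k^2 / (2 * \<kappa>) \<le> shell_const \<gamma> - real k"
proof -
  define \<eta> where "\<eta> = 1 / (2*\<kappa>) - \<gamma>"
  have eta: "0 < \<eta>" using assms kappa_pos unfolding \<eta>_def by (simp add: field_simps)
  define b where "b = 2*\<gamma>+1"
  have "0 \<le> \<eta> * (real k - b / (2*\<eta>))^2" using eta by simp
  also have "\<eta> * (real k - b / (2*\<eta>))^2 = \<eta> * real k^2 - b * real k + b^2/(4*\<eta>)"
    using eta by (simp add: field_simps power2_eq_square)
  finally have "b * real k - \<eta> * real k^2 \<le> b^2/(4*\<eta>)" by simp
  moreover have "\<gamma> * (real k + 1)^2 - real k^2 / (2 * \<kappa>) = b * real k - \<eta> * real k^2 + \<gamma> - real k"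
    unfolding b_def \<eta>_def by (simp add: field_simps power2_eq_square)
  ultimately show ?thesis unfolding shell_const_def b_def[symmetric] \<eta>_def[symmetric] by linarith
qed

lemma shell_sum_le:
  assumes "2 * \<gamma> * \<kappa> < 1"
  shows "(\<Sum>k<m. exp (\<gamma> * (real k + 1)^2) * (2 * exp (- (real k^2) / (2 * \<kappa>))))
         \<le> 2 * exp (shell_const \<gamma>) / (1 - exp (-1))"
proof -
  have "(\<Sum>k<m. exp (\<gamma> * (real k + 1)^2) * (2 * exp (- (real k^2) / (2 * \<kappa>))))
      \<le> (\<Sum>k<m. 2 * exp (shell_const \<gamma>) * exp (-1) ^ k)"
  proof (intro sum_mono)
    fix k
    have "exp (\<gamma> * (real k + 1)^2) * (2 * exp (- (real k^2) / (2 * \<kappa>)))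
          = 2 * exp (\<gamma> * (real k + 1)^2 - real k^2 / (2 * \<kappa>))"
      by (simp add: exp_diff exp_minus field_simps)
    also have "\<dots> \<le> 2 * exp (shell_const \<gamma> - real k)"
      using shell_exponent_le[OF assms, of k] by simp
    also have "\<dots> = 2 * exp (shell_const \<gamma>) * exp (-1) ^ k"
      by (simp add: exp_diff exp_minus exp_of_nat_mult[symmetric] field_simps)
    finally show "exp (\<gamma> * (real k + 1)^2) * (2 * exp (- (real k^2) / (2 * \<kappa>)))
                  \<le> 2 * exp (shell_const \<gamma>) * exp (-1) ^ k" .
  qed
  also have "\<dots> \<le> 2 * exp (shell_const \<gamma>) * (1 / (1 - exp (-1)))"
    unfolding sum_distrib_left[symmetric]
    using geometric_sum_le[of "exp (-1)" m] by (intro mult_left_mono) auto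
  finally show ?thesis by simp
qed

lemma exp_quad_moment_le:
  assumes "0 \<le> \<gamma>" "2 * \<gamma> * \<kappa> < 1" "0 < n"
  shows "(\<Sum>x\<in>spins n. Q_pmf n t x * exp (\<gamma> * (deviation n x)^2 / real n))
         \<le> 4 * exp (shell_const \<gamma>) / (1 - exp (-1))"
  using moment_le_twice_nonneg_part[OF less_imp_le[OF assms(2)] assms(3)]
    nonneg_part_moment_le_shell_sum[OF assms(1,3)] shell_sum_le[OF assms(2), of "2*n+1"]
  by linarith

end

lemma edge_slots_subset: "edge_slots n \<subseteq> {..<n} \<times> {..<n}"
  by (auto simp: edge_slots_def)

lemma finite_edge_slots [simp]: "finite (edge_slots n)"
  by (rule finite_subset[OF edge_slots_subset]) auto

definition edge_sum :: "(nat \<times> nat) set \<Rightarrow> (nat \<Rightarrow> real) \<Rightarrow> real" where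
  "edge_sum G x = (\<Sum>e\<in>G. x (fst e) * x (snd e))"

lemma quadratic_form_adj:
  assumes G: "G \<subseteq> edge_slots n"
  shows "(\<Sum>i<n. \<Sum>j<n. x i * adj G i j * x j) = 2 * edge_sum G x"
proof -
  define Bx where "Bx = {..<n} \<times> {..<n}"
  have finB: "finite Bx" by (simp add: Bx_def)
  have GB: "G \<subseteq> Bx" using G edge_slots_subset unfolding Bx_def by blast
  define f where "f e = x (fst e) * x (snd e)" for e
  have adj_split: "adj G i j = (if (i,j) \<in> G then 1 else 0) + (if (j,i) \<in> G then 1 else 0)" for i j
  proof -
    have "\<not> ((i,j) \<in> G \<and> (j,i) \<in> G)"
    proof
      assume "(i,j) \<in> G \<and> (j,i) \<in> G"
      then have "(i,j) \<in> edge_slots n" "(j,i) \<in> edge_slots n" using G by auto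
      then show False by (simp add: edge_slots_def)
    qed
    then show ?thesis by (auto simp: adj_def)
  qed
  have "(\<Sum>i<n. \<Sum>j<n. x i * adj G i j * x j) = (\<Sum>e\<in>Bx. x (fst e) * adj G (fst e) (snd e) * x (snd e))"
    unfolding Bx_def by (simp add: sum.cartesian_product split_def)
  also have "\<dots> = (\<Sum>e\<in>Bx. if e \<in> G then f e else 0) + (\<Sum>e\<in>Bx. if (snd e, fst e) \<in> G then f e else 0)"
    unfolding sum.distrib[symmetric] by (intro sum.cong refl) (auto simp: adj_split f_def)
  also have "(\<Sum>e\<in>Bx. if e \<in> G then f e else 0) = sum f G"
    using GB sum.inter_restrict[OF finB, of f G] by (simp add: Int_absorb1)
  also have "(\<Sum>e\<in>Bx. if (snd e, fst e) \<in> G then f e else 0) = (\<Sum>e\<in>Bx. if e \<in> G then f e else 0)"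
    by (rule sum.reindex_bij_witness[where i = "\<lambda>(a,b). (b,a)" and j = "\<lambda>(a,b). (b,a)"])
       (auto simp: Bx_def f_def)
  also have "\<dots> = sum f G"
    using GB sum.inter_restrict[OF finB, of f G] by (simp add: Int_absorb1)
  finally show ?thesis by (simp add: edge_sum_def f_def)
qed

lemma adj_edge_slots: "i < n \<Longrightarrow> j < n \<Longrightarrow> adj (edge_slots n) i j = (if i = j then 0 else 1)"
  by (auto simp: adj_def edge_slots_def)

lemma edge_sum_edge_slots: "2 * edge_sum (edge_slots n) x = (spin_sum n x)^2 - (\<Sum>i<n. (x i)^2)"
proof -
  have "2 * edge_sum (edge_slots n) x = (\<Sum>i<n. \<Sum>j<n. x i * adj (edge_slots n) i j * x j)"
    by (simp add: quadratic_form_adj)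
  also have "\<dots> = (\<Sum>i<n. (\<Sum>j<n. x i * x j) - x i * x i)"
  proof (intro sum.cong refl)
    fix i assume i: "i \<in> {..<n}"
    have "(\<Sum>j<n. x i * adj (edge_slots n) i j * x j) = (\<Sum>j<n. x i * x j - (if i = j then x i * x j else 0))"
      using i by (intro sum.cong refl) (auto simp: adj_edge_slots)
    also have "\<dots> = (\<Sum>j<n. x i * x j) - x i * x i"
      using i by (simp add: sum_subtractf)
    finally show "(\<Sum>j<n. x i * adj (edge_slots n) i j * x j) = (\<Sum>j<n. x i * x j) - x i * x i" .
  qed
  also have "\<dots> = (spin_sum n x)^2 - (\<Sum>i<n. (x i)^2)"
    by (simp add: sum_subtractf spin_sum_def power2_eq_square sum_product)
  finally show ?thesis .
qed

lemma card_edge_slots: "2 * real (card (edge_slots n)) = real n * (real n - 1)"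
proof -
  have "2 * edge_sum (edge_slots n) (\<lambda>_. 1) = real n * (real n - 1)"
    using edge_sum_edge_slots[of n "\<lambda>_. 1"] by (simp add: spin_sum_def power2_eq_square algebra_simps)
  then show ?thesis by (simp add: edge_sum_def)
qed

lemma edge_sum_edge_slots_spins: "x \<in> spins n \<Longrightarrow> 2 * edge_sum (edge_slots n) x = (spin_sum n x)^2 - real n"
proof -
  assume x: "x \<in> spins n"
  have "(\<Sum>i<n. (x i)^2) = (\<Sum>i<n. 1)" using spins_value[OF x] by (intro sum.cong refl) force
  then show ?thesis using edge_sum_edge_slots[of n x] by simp
qed

lemma sum_er_pmf_prod:
  fixes w :: "nat \<times> nat \<Rightarrow> real"
  shows "(\<Sum>G\<in>Pow (edge_slots n). er_pmf n p G * (\<Prod>e\<in>G. w e)) = (\<Prod>e\<in>edge_slots n. p * w e + (1 - p))"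
proof -
  have "(\<Prod>e\<in>edge_slots n. p * w e + (1 - p)) = (\<Sum>X\<in>Pow (edge_slots n). (\<Prod>e\<in>X. p * w e) * (\<Prod>e\<in>edge_slots n - X. 1 - p))"
    by (rule prod_add) simp
  also have "\<dots> = (\<Sum>G\<in>Pow (edge_slots n). er_pmf n p G * (\<Prod>e\<in>G. w e))"
  proof (intro sum.cong refl)
    fix X assume X: "X \<in> Pow (edge_slots n)"
    have "card (edge_slots n - X) = card (edge_slots n) - card X"
      using X by (intro card_Diff_subset) (auto intro: finite_subset)
    then show "(\<Prod>e\<in>X. p * w e) * (\<Prod>e\<in>edge_slots n - X. 1 - p) = er_pmf n p X * (\<Prod>e\<in>X. w e)"
      by (simp add: er_pmf_def prod.distrib)
  qed
  finally show ?thesis by simp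
qed

lemma sum_er_pmf: "(\<Sum>G\<in>Pow (edge_slots n). er_pmf n p G) = 1"
  using sum_er_pmf_prod[of n p "\<lambda>_. 1"] by simp

lemma er_pmf_nonneg: "0 \<le> p \<Longrightarrow> p \<le> 1 \<Longrightarrow> 0 \<le> er_pmf n p G"
  by (simp add: er_pmf_def)


lemma er_mgf_edge_sum_le:
  assumes x: "x \<in> spins n" and c: "\<bar>c\<bar> \<le> 1" and p: "0 \<le> p" "p \<le> 1"
  shows "(\<Sum>G\<in>Pow (edge_slots n). er_pmf n p G * exp (c * edge_sum G x))
         \<le> exp (p * c * ((spin_sum n x)^2 - real n) / 2 + p * c^2 * real n * (real n - 1) / 2)"
proof -
  define u where "u e = c * (x (fst e) * x (snd e))" for e
  have u_sq: "(u e)^2 = c^2" and u_abs: "\<bar>u e\<bar> \<le> 1" if "e \<in> edge_slots n" for e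
  proof -
    have "fst e < n" "snd e < n" using that by (auto simp: edge_slots_def)
    then have "u e = c \<or> u e = - c"
      using spins_value[OF x, of "fst e"] spins_value[OF x, of "snd e"] by (auto simp: u_def)
    then show "(u e)^2 = c^2" "\<bar>u e\<bar> \<le> 1" using c by auto
  qed
  have "exp (c * edge_sum G x) = (\<Prod>e\<in>G. exp (u e))" if "G \<in> Pow (edge_slots n)" for G
    using that finite_subset[OF _ finite_edge_slots, of G]
    by (simp add: u_def edge_sum_def sum_distrib_left exp_sum)
  then have "(\<Sum>G\<in>Pow (edge_slots n). er_pmf n p G * exp (c * edge_sum G x))
      = (\<Sum>G\<in>Pow (edge_slots n). er_pmf n p G * (\<Prod>e\<in>G. exp (u e)))"
    by (intro sum.cong) auto
  also have "\<dots> = (\<Prod>e\<in>edge_slots n. p * exp (u e) + (1 - p))"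
    by (rule sum_er_pmf_prod)
  also have "\<dots> \<le> (\<Prod>e\<in>edge_slots n. exp (p * u e + p * c^2))"
  proof (intro prod_mono conjI)
    fix e assume "e \<in> edge_slots n"
    then show "p * exp (u e) + (1 - p) \<le> exp (p * u e + p * c^2)"
      using bernoulli_mgf_le[OF u_abs p(1)] u_sq by simp
  qed (use p in simp)
  also have "\<dots> = exp (\<Sum>e\<in>edge_slots n. p * u e + p * c^2)"
    by (simp add: exp_sum)
  also have "\<dots> = exp (p * c * edge_sum (edge_slots n) x + real (card (edge_slots n)) * p * c^2)"
    by (simp add: sum.distrib u_def edge_sum_def sum_distrib_left mult.assoc)
  also have "\<dots> = exp (p * c * ((spin_sum n x)^2 - real n) / 2 + p * c^2 * real n * (real n - 1) / 2)"
  proof -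
    have E: "edge_sum (edge_slots n) x = ((spin_sum n x)^2 - real n) / 2"
      and C: "real (card (edge_slots n)) = real n * (real n - 1) / 2"
      using edge_sum_edge_slots_spins[OF x] card_edge_slots[of n] by simp_all
    show ?thesis unfolding E C by (simp add: field_simps)
  qed
  finally show ?thesis .
qed

lemma ising_energy_coupling:
  assumes "G \<subseteq> edge_slots n"
  shows "ising_energy n (coupling n p G) \<beta> B x
         = \<beta> / ((real n - 1) * p) * edge_sum G x + B * spin_sum n x"
proof -
  have "(\<Sum>i<n. \<Sum>j<n. x i * coupling n p G i j * x j)
      = (\<Sum>i<n. \<Sum>j<n. x i * adj G i j * x j) / ((real n - 1) * p)"
    by (simp add: coupling_def sum_divide_distrib)
  then show ?thesis by (simp add: ising_energy_def spin_sum_def quadratic_form_adj[OF assms])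
qed

text \<open>The graph-averaged exponent of \<open>exp (-F)\<close> below: maximise the concave quadratic in \<open>S\<close>.\<close>
lemma annealed_exponent_neg_le:
  fixes \<beta> p t S :: real
  assumes "2 \<le> n" "0 < \<beta>" "0 < p"
  shows "- (\<beta> * (S^2 - real n) / (2 * (real n - 1)) - \<beta> * t * S) + real n * \<beta>^2 / (2 * (real n - 1) * p)
         \<le> \<beta> * real n * t^2 / 2 + \<beta> + \<beta>^2 / p"
proof -
  define N where "N = real n - 1"
  have N: "1 \<le> N" "real n = N + 1" using assms(1) by (simp_all add: N_def)
  have "0 \<le> \<beta> / (2 * N) * (S - N * t)^2" using assms N by simp
  also have "\<beta> / (2 * N) * (S - N * t)^2 = \<beta> * S^2 / (2 * N) - \<beta> * t * S + \<beta> * N * t^2 / 2"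
    using N by (simp add: field_simps power2_eq_square)
  finally have "- (\<beta> * S^2 / (2 * N)) + \<beta> * t * S \<le> \<beta> * N * t^2 / 2" by simp
  also have "\<dots> \<le> \<beta> * real n * t^2 / 2"
    using assms(2) N by (simp add: mult_right_mono)
  moreover have "\<beta> * real n / (2 * N) \<le> \<beta>"
    using assms N by (simp add: field_simps)
  moreover have "real n * \<beta>^2 / (2 * N * p) \<le> \<beta>^2 / p"
    using assms(3) N mult_right_mono[of "real n / (2 * N)" 1 "\<beta>^2 / p"] by (simp add: field_simps)
  moreover have "- (\<beta> * (S^2 - real n) / (2 * N) - \<beta> * t * S)
                 = - (\<beta> * S^2 / (2 * N)) + \<beta> * t * S + \<beta> * real n / (2 * N)"
    using N by (simp add: field_simps)
  ultimately show ?thesis by (simp add: N_def[symmetric])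
qed

text \<open>The graph-averaged exponent of \<open>exp F\<close> below: writing \<open>D = S - n t\<close> it is
  \<open>-\<beta> n t\<^sup>2/2 + \<beta> D\<^sup>2/(2(n-1))\<close> up to bounded terms, and the factor \<open>(1+\<delta>)\<^sup>2\<close> absorbs both the
  cross term and the ratio \<open>n/(n-1)\<close>.\<close>
lemma annealed_exponent_le:
  fixes \<beta> p t \<delta> S :: real
  assumes "2 \<le> n" "0 < \<beta>" "0 < p" "0 < t" "t \<le> 1" "0 < \<delta>" "1 + \<delta> \<le> \<delta> * real n"
  shows "\<beta> * (S^2 - real n) / (2 * (real n - 1)) - \<beta> * t * S + real n * \<beta>^2 / (2 * (real n - 1) * p)
         \<le> - (\<beta> * real n * t^2 / 2) + (\<beta> * (1 + 1/\<delta>) + \<beta> + \<beta>^2 / p)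
            + \<beta> * (1 + \<delta>)^2 / 2 * (S - real n * t)^2 / real n"
proof -
  define N where "N = real n - 1"
  define D where "D = S - real n * t"
  have N: "1 \<le> N" "real n = N + 1" using assms(1) by (simp_all add: N_def)
  have t2: "t^2 \<le> 1" using assms(4,5) by (simp add: power_le_one)
  have "(D + t)^2 \<le> (1 + \<delta>) * D^2 + (1 + 1/\<delta>)"
  proof -
    have "0 \<le> (\<delta> * D - t)^2 / \<delta>" using assms(6) by simp
    also have "(\<delta> * D - t)^2 / \<delta> = \<delta> * D^2 - 2 * D * t + t^2 / \<delta>"
      using assms(6) by (simp add: field_simps power2_eq_square)
    finally have "(D + t)^2 \<le> (1 + \<delta>) * D^2 + (1 + 1/\<delta>) * t^2"
      by (simp add: field_simps power2_eq_square)
    also have "(1 + 1/\<delta>) * t^2 \<le> 1 + 1/\<delta>"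
      using assms(6) t2 by (simp add: mult_left_le)
    finally show ?thesis by simp
  qed
  then have "\<beta> * (D + t)^2 / (2 * N) \<le> \<beta> * ((1 + \<delta>) * D^2 + (1 + 1/\<delta>)) / (2 * N)"
    using assms(2) N by (intro divide_right_mono mult_left_mono) auto
  also have "\<dots> = \<beta> / 2 * (1 + \<delta>) * D^2 * (1 / N) + \<beta> / 2 * (1 + 1/\<delta>) * (1 / N)"
    by (simp add: field_simps) (simp add: add_divide_distrib)
  also have "\<dots> \<le> \<beta> / 2 * (1 + \<delta>) * D^2 * ((1 + \<delta>) / real n) + \<beta> / 2 * (1 + 1/\<delta>) * 1"
  proof (intro add_mono mult_left_mono)
    show "1 / N \<le> (1 + \<delta>) / real n" "1 / N \<le> 1"
      using assms(6,7) N by (simp_all add: field_simps)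
  qed (use assms(2,6) in auto)
  also have "\<dots> \<le> \<beta> * (1 + \<delta>)^2 / 2 * D^2 / real n + \<beta> * (1 + 1/\<delta>)"
    using assms(2,6) by (simp add: power2_eq_square field_simps)
  finally have cross: "\<beta> * (D + t)^2 / (2 * N) \<le> \<beta> * (1 + \<delta>)^2 / 2 * D^2 / real n + \<beta> * (1 + 1/\<delta>)" .
  have "\<beta> * (S^2 - real n) / (2 * N) \<le> \<beta> * S^2 / (2 * N)"
    using assms(2) N by (simp add: divide_right_mono mult_left_mono)
  moreover have "\<beta> * S^2 / (2 * N) - \<beta> * t * S = \<beta> * (D + t)^2 / (2 * N) - \<beta> * N * t^2 / 2"
    using N by (simp add: D_def field_simps power2_eq_square)
  moreover note cross
  moreover have "- (\<beta> * N * t^2 / 2) \<le> - (\<beta> * real n * t^2 / 2) + \<beta>"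
    using assms(2) t2 N by (simp add: field_simps)
  moreover have "real n * \<beta>^2 / (2 * N * p) \<le> \<beta>^2 / p"
    using assms(3) N mult_right_mono[of "real n / (2 * N)" 1 "\<beta>^2 / p"] by (simp add: field_simps)
  ultimately show ?thesis by (simp add: N_def[symmetric] D_def[symmetric])
qed

locale ising_er = tilted_spins +
  fixes p \<beta> B :: real
  assumes p_pos: "0 < p" and p_le_one: "p \<le> 1" and beta_pos: "0 < \<beta>" and B_pos: "0 < B"
    and theta_eq: "\<theta> = \<beta> * t + B"
begin

text \<open>\<open>exp (excess_energy n G x)\<close> is the unnormalised Ising weight of \<open>x\<close> on \<open>G\<close> divided by the
  unnormalised \<open>Q\<^sub>n\<close>-weight \<open>exp (\<theta> S)\<close>.\<close>
definition excess_energy :: "nat \<Rightarrow> (nat \<times> nat) set \<Rightarrow> (nat \<Rightarrow> real) \<Rightarrow> real" where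
  "excess_energy n G x = ising_energy n (coupling n p G) \<beta> B x - \<theta> * spin_sum n x"

lemma excess_energy_eq:
  "G \<subseteq> edge_slots n \<Longrightarrow>
   excess_energy n G x = \<beta> / ((real n - 1) * p) * edge_sum G x - \<beta> * t * spin_sum n x"
  unfolding excess_energy_def by (simp add: ising_energy_coupling theta_eq algebra_simps)

lemma er_mean_exp_excess_energy_le:
  assumes "2 \<le> n" "\<beta> \<le> (real n - 1) * p" "x \<in> spins n" "\<sigma> = 1 \<or> \<sigma> = -1"
  shows "(\<Sum>G\<in>Pow (edge_slots n). er_pmf n p G * exp (\<sigma> * excess_energy n G x))
     \<le> exp (\<sigma> * (\<beta> * ((spin_sum n x)^2 - real n) / (2 * (real n - 1)) - \<beta> * t * spin_sum n x)
            + real n * \<beta>^2 / (2 * (real n - 1) * p))"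
proof -
  define N where "N = real n - 1"
  define c where "c = \<sigma> * \<beta> / (N * p)"
  have N: "0 < N" using assms(1) by (simp add: N_def)
  have c: "\<bar>c\<bar> \<le> 1" using assms(2,4) N p_pos beta_pos by (auto simp: c_def N_def)
  have "\<sigma>^2 = 1" using assms(4) by auto
  then have "c^2 = \<beta>^2 / (N * p)^2" by (simp add: c_def power_divide power_mult_distrib)
  then have c2: "p * c^2 * real n * N / 2 = real n * \<beta>^2 / (2 * N * p)"
    using N p_pos by (simp add: power2_eq_square field_simps)
  have c1: "p * c * ((spin_sum n x)^2 - real n) / 2 = \<sigma> * (\<beta> * ((spin_sum n x)^2 - real n) / (2 * N))"
    using N p_pos by (simp add: c_def field_simps)
  have "(\<Sum>G\<in>Pow (edge_slots n). er_pmf n p G * exp (\<sigma> * excess_energy n G x))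
      = exp (- \<sigma> * \<beta> * t * spin_sum n x) * (\<Sum>G\<in>Pow (edge_slots n). er_pmf n p G * exp (c * edge_sum G x))"
    unfolding sum_distrib_left
    by (intro sum.cong refl) (simp add: excess_energy_eq c_def N_def algebra_simps flip: exp_add)
  also have "\<dots> \<le> exp (- \<sigma> * \<beta> * t * spin_sum n x)
      * exp (p * c * ((spin_sum n x)^2 - real n) / 2 + p * c^2 * real n * (real n - 1) / 2)"
    using er_mgf_edge_sum_le[OF assms(3) c] p_pos p_le_one by (intro mult_left_mono) auto
  also have "\<dots> = exp (\<sigma> * (\<beta> * ((spin_sum n x)^2 - real n) / (2 * N) - \<beta> * t * spin_sum n x)
            + real n * \<beta>^2 / (2 * N * p))"
    unfolding N_def[symmetric] c1 c2 by (simp add: algebra_simps flip: exp_add)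
  finally show ?thesis by (simp add: N_def)
qed

definition mean_exp_excess :: "nat \<Rightarrow> real" where
  "mean_exp_excess n = (\<Sum>x\<in>spins n. Q_pmf n t x *
     (\<Sum>G\<in>Pow (edge_slots n). er_pmf n p G * exp (excess_energy n G x)))"

definition mean_exp_neg_excess :: "nat \<Rightarrow> real" where
  "mean_exp_neg_excess n = (\<Sum>x\<in>spins n. Q_pmf n t x *
     (\<Sum>G\<in>Pow (edge_slots n). er_pmf n p G * exp (- excess_energy n G x)))"

lemma mean_exp_neg_excess_le:
  assumes "2 \<le> n" "\<beta> \<le> (real n - 1) * p"
  shows "mean_exp_neg_excess n \<le> exp (\<beta> * real n * t^2 / 2 + \<beta> + \<beta>^2 / p)"
proof -
  have "(\<Sum>G\<in>Pow (edge_slots n). er_pmf n p G * exp (- excess_energy n G x))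
        \<le> exp (\<beta> * real n * t^2 / 2 + \<beta> + \<beta>^2 / p)" if "x \<in> spins n" for x
  proof -
    let ?S = "spin_sum n x"
    have "(\<Sum>G\<in>Pow (edge_slots n). er_pmf n p G * exp (- excess_energy n G x))
        \<le> exp (- (\<beta> * (?S^2 - real n) / (2 * (real n - 1)) - \<beta> * t * ?S)
               + real n * \<beta>^2 / (2 * (real n - 1) * p))"
      using er_mean_exp_excess_energy_le[OF assms that disjI2[OF refl]] by simp
    also have "\<dots> \<le> exp (\<beta> * real n * t^2 / 2 + \<beta> + \<beta>^2 / p)"
      using annealed_exponent_neg_le[OF assms(1) beta_pos p_pos] by simp
    finally show ?thesis .
  qed
  then have "mean_exp_neg_excess n \<le> (\<Sum>x\<in>spins n. Q_pmf n t x * exp (\<beta> * real n * t^2 / 2 + \<beta> + \<beta>^2 / p))"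
    unfolding mean_exp_neg_excess_def by (intro sum_mono mult_left_mono) (auto simp: Q_nonneg)
  also have "\<dots> = exp (\<beta> * real n * t^2 / 2 + \<beta> + \<beta>^2 / p)"
    by (simp add: sum_Q flip: sum_distrib_right)
  finally show ?thesis .
qed

lemma mean_exp_excess_le:
  assumes "2 \<le> n" "\<beta> \<le> (real n - 1) * p" "0 < \<delta>" "1 + \<delta> \<le> \<delta> * real n"
  shows "mean_exp_excess n \<le> exp (- (\<beta> * real n * t^2 / 2) + (\<beta> * (1 + 1/\<delta>) + \<beta> + \<beta>^2 / p))
           * (\<Sum>x\<in>spins n. Q_pmf n t x * exp (\<beta> * (1 + \<delta>)^2 / 2 * (deviation n x)^2 / real n))"
proof -
  define C where "C = - (\<beta> * real n * t^2 / 2) + (\<beta> * (1 + 1/\<delta>) + \<beta> + \<beta>^2 / p)"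
  have "(\<Sum>G\<in>Pow (edge_slots n). er_pmf n p G * exp (excess_energy n G x))
        \<le> exp (C + \<beta> * (1 + \<delta>)^2 / 2 * (deviation n x)^2 / real n)" if "x \<in> spins n" for x
  proof -
    let ?S = "spin_sum n x"
    have "(\<Sum>G\<in>Pow (edge_slots n). er_pmf n p G * exp (excess_energy n G x))
        \<le> exp (\<beta> * (?S^2 - real n) / (2 * (real n - 1)) - \<beta> * t * ?S
               + real n * \<beta>^2 / (2 * (real n - 1) * p))"
      using er_mean_exp_excess_energy_le[OF assms(1,2) that disjI1[OF refl]] by simp
    also have "\<dots> \<le> exp (C + \<beta> * (1 + \<delta>)^2 / 2 * (deviation n x)^2 / real n)"
      using annealed_exponent_le[OF assms(1) beta_pos p_pos t_pos _ assms(3,4)] t_less_one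
      by (simp add: C_def deviation_def)
    finally show ?thesis .
  qed
  then have "mean_exp_excess n
      \<le> (\<Sum>x\<in>spins n. Q_pmf n t x * exp (C + \<beta> * (1 + \<delta>)^2 / 2 * (deviation n x)^2 / real n))"
    unfolding mean_exp_excess_def by (intro sum_mono mult_left_mono) (auto simp: Q_nonneg)
  then show ?thesis by (simp add: C_def exp_add sum_distrib_left mult_ac)
qed

end

lemma finite_sample_space [simp]: "finite (sample_space n)"
  by (simp add: sample_space_def)

lemma sum_sample_space:
  "(\<Sum>\<omega>\<in>sample_space n. f \<omega>) = (\<Sum>x\<in>spins n. \<Sum>G\<in>Pow (edge_slots n). f (x, G))"
  by (simp add: sample_space_def sum.cartesian_product)

lemma ising_Z_pos: "0 < ising_Z n A \<beta> B"
proof -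
  have "(\<lambda>i. if i < n then 1 else undefined) \<in> spins n"
    by (simp add: spins_def PiE_def extensional_def)
  then have "exp (ising_energy n A \<beta> B (\<lambda>i. if i < n then 1 else undefined)) \<le> ising_Z n A \<beta> B"
    unfolding ising_Z_def by (rule member_le_sum) auto
  then show ?thesis using exp_gt_zero order_less_le_trans by blast
qed

lemma ising_pmf_pos: "0 < ising_pmf n A \<beta> B x"
  using ising_Z_pos by (simp add: ising_pmf_def)

context ising_er
begin

definition likelihood_ratio :: "nat \<Rightarrow> (nat \<Rightarrow> real) \<times> (nat \<times> nat) set \<Rightarrow> real" where
  "likelihood_ratio n \<omega> = Q_pmf n t (fst \<omega>) / ising_pmf n (coupling n p (snd \<omega>)) \<beta> B (fst \<omega>)"

definition partition_ratio :: "nat \<Rightarrow> (nat \<times> nat) set \<Rightarrow> real" where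
  "partition_ratio n G = (\<Sum>y\<in>spins n. Q_pmf n t y * exp (excess_energy n G y))"

lemma partition_ratio_nonneg: "0 \<le> partition_ratio n G"
  unfolding partition_ratio_def by (intro sum_nonneg mult_nonneg_nonneg Q_nonneg) auto

lemma partition_ratio_eq: "partition_ratio n G = ising_Z n (coupling n p G) \<beta> B / (2 * cosh \<theta>) ^ n"
  unfolding partition_ratio_def ising_Z_def sum_divide_distrib
  by (intro sum.cong refl) (simp add: Q_pmf_eq excess_energy_def flip: exp_add)

lemma likelihood_ratio_eq:
  assumes "x \<in> spins n"
  shows "likelihood_ratio n (x, G) = exp (- excess_energy n G x) * partition_ratio n G"
  using assms ising_Z_pos[of n "coupling n p G" \<beta> B]
  unfolding likelihood_ratio_def partition_ratio_eq excess_energy_def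
  by (simp add: Q_pmf_eq ising_pmf_def exp_diff)

lemma P_er_pmf_nonneg: "0 \<le> P_er_pmf n p \<beta> B \<omega>"
  using p_pos p_le_one ising_pmf_pos
  by (simp add: P_er_pmf_def er_pmf_nonneg less_imp_le)

lemma QG_pmf_nonneg: "0 \<le> QG_pmf n p t \<omega>"
  using p_pos p_le_one by (simp add: QG_pmf_def er_pmf_nonneg Q_nonneg)

lemma QG_pmf_eq_likelihood_ratio: "QG_pmf n p t \<omega> = likelihood_ratio n \<omega> * P_er_pmf n p \<beta> B \<omega>"
  using ising_pmf_pos[of n "coupling n p (snd \<omega>)" \<beta> B "fst \<omega>"]
  by (simp add: QG_pmf_def likelihood_ratio_def P_er_pmf_def)

lemma QG_le_mult_P_er_plus_tail:
  assumes "0 < K"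
  shows "QG n p t E \<le> K * P_er n p \<beta> B E
                        + (\<Sum>\<omega>\<in>{\<omega>\<in>sample_space n. K < likelihood_ratio n \<omega>}. QG_pmf n p t \<omega>)"
proof -
  define A where "A = E \<inter> sample_space n"
  have "QG n p t E = (\<Sum>\<omega>\<in>{\<omega>\<in>A. likelihood_ratio n \<omega> \<le> K}. QG_pmf n p t \<omega>)
                    + (\<Sum>\<omega>\<in>{\<omega>\<in>A. K < likelihood_ratio n \<omega>}. QG_pmf n p t \<omega>)"
    unfolding QG_def prob_of_def A_def[symmetric]
    by (subst sum.union_disjoint[symmetric]) (auto simp: A_def intro!: sum.cong)
  also have "(\<Sum>\<omega>\<in>{\<omega>\<in>A. likelihood_ratio n \<omega> \<le> K}. QG_pmf n p t \<omega>)
             \<le> (\<Sum>\<omega>\<in>{\<omega>\<in>A. likelihood_ratio n \<omega> \<le> K}. K * P_er_pmf n p \<beta> B \<omega>)"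
    by (intro sum_mono) (auto simp: QG_pmf_eq_likelihood_ratio P_er_pmf_nonneg mult_right_mono)
  also have "\<dots> \<le> K * P_er n p \<beta> B E"
    using assms unfolding P_er_def prob_of_def A_def[symmetric] sum_distrib_left[symmetric]
    by (intro mult_left_mono sum_mono2) (auto simp: A_def P_er_pmf_nonneg)
  also have "(\<Sum>\<omega>\<in>{\<omega>\<in>A. K < likelihood_ratio n \<omega>}. QG_pmf n p t \<omega>)
             \<le> (\<Sum>\<omega>\<in>{\<omega>\<in>sample_space n. K < likelihood_ratio n \<omega>}. QG_pmf n p t \<omega>)"
    by (intro sum_mono2) (auto simp: A_def QG_pmf_nonneg)
  finally show ?thesis by simp
qed

text \<open>The likelihood ratio is the product of \<open>exp (-F)\<close> and the normalised partition function;
  if it exceeds \<open>K\<close>, one of the two factors exceeds \<open>a\<close> resp. \<open>K/a\<close>, and Markov's inequality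
  applies to each factor.\<close>
lemma likelihood_ratio_tail_le:
  assumes "0 < K" "0 < a"
  shows "(\<Sum>\<omega>\<in>{\<omega>\<in>sample_space n. K < likelihood_ratio n \<omega>}. QG_pmf n p t \<omega>)
         \<le> mean_exp_excess n / a + mean_exp_neg_excess n * a / K"
proof -
  define S1 where "S1 = {\<omega>\<in>sample_space n. a < partition_ratio n (snd \<omega>)}"
  define S2 where "S2 = {\<omega>\<in>sample_space n. K / a < exp (- excess_energy n (snd \<omega>) (fst \<omega>))}"
  have "{\<omega>\<in>sample_space n. K < likelihood_ratio n \<omega>} \<subseteq> S1 \<union> S2"
  proof (clarify)
    fix x G assume \<omega>: "(x, G) \<in> sample_space n" "K < likelihood_ratio n (x, G)" "(x, G) \<notin> S2"
    then have small: "exp (- excess_energy n G x) \<le> K / a" by (simp add: S2_def)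
    have large: "K < exp (- excess_energy n G x) * partition_ratio n G"
      using \<omega> likelihood_ratio_eq[of x n G] by (simp add: sample_space_def)
    have "a < partition_ratio n G"
    proof (rule ccontr)
      assume "\<not> a < partition_ratio n G"
      then have "exp (- excess_energy n G x) * partition_ratio n G \<le> K / a * a"
        using small assms partition_ratio_nonneg[of n G] by (intro mult_mono) auto
      then show False using large assms by simp
    qed
    then show "(x, G) \<in> S1" using \<omega> by (simp add: S1_def)
  qed
  then have "(\<Sum>\<omega>\<in>{\<omega>\<in>sample_space n. K < likelihood_ratio n \<omega>}. QG_pmf n p t \<omega>)
             \<le> (\<Sum>\<omega>\<in>S1. QG_pmf n p t \<omega>) + (\<Sum>\<omega>\<in>S2. QG_pmf n p t \<omega>)"
  proof -
    have "(\<Sum>\<omega>\<in>{\<omega>\<in>sample_space n. K < likelihood_ratio n \<omega>}. QG_pmf n p t \<omega>)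
          \<le> (\<Sum>\<omega>\<in>S1 \<union> S2. QG_pmf n p t \<omega>)"
      using \<open>_ \<subseteq> S1 \<union> S2\<close> by (intro sum_mono2) (auto simp: S1_def S2_def QG_pmf_nonneg)
    also have "\<dots> \<le> (\<Sum>\<omega>\<in>S1. QG_pmf n p t \<omega>) + (\<Sum>\<omega>\<in>S2. QG_pmf n p t \<omega>)"
      by (intro sum_Un_le) (auto simp: S1_def S2_def QG_pmf_nonneg)
    finally show ?thesis .
  qed
  also have "(\<Sum>\<omega>\<in>S1. QG_pmf n p t \<omega>) \<le> (\<Sum>\<omega>\<in>sample_space n. QG_pmf n p t \<omega> * partition_ratio n (snd \<omega>)) / a"
    unfolding S1_def using assms(2)
    by (intro markov_sum) (auto simp: QG_pmf_nonneg partition_ratio_nonneg)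
  also have "(\<Sum>\<omega>\<in>sample_space n. QG_pmf n p t \<omega> * partition_ratio n (snd \<omega>)) = mean_exp_excess n"
  proof -
    have "(\<Sum>\<omega>\<in>sample_space n. QG_pmf n p t \<omega> * partition_ratio n (snd \<omega>))
        = (\<Sum>x\<in>spins n. Q_pmf n t x) * (\<Sum>G\<in>Pow (edge_slots n). er_pmf n p G * partition_ratio n G)"
      by (simp add: sum_sample_space QG_pmf_def sum_product mult_ac)
    also have "(\<Sum>G\<in>Pow (edge_slots n). er_pmf n p G * partition_ratio n G) = mean_exp_excess n"
      unfolding mean_exp_excess_def partition_ratio_def sum_distrib_left
      by (subst sum.swap) (simp add: mult_ac)
    finally show ?thesis by (simp add: sum_Q)
  qed
  also have "(\<Sum>\<omega>\<in>S2. QG_pmf n p t \<omega>)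
             \<le> (\<Sum>\<omega>\<in>sample_space n. QG_pmf n p t \<omega> * exp (- excess_energy n (snd \<omega>) (fst \<omega>))) / (K / a)"
    unfolding S2_def using assms by (intro markov_sum) (auto simp: QG_pmf_nonneg)
  also have "(\<Sum>\<omega>\<in>sample_space n. QG_pmf n p t \<omega> * exp (- excess_energy n (snd \<omega>) (fst \<omega>)))
             = mean_exp_neg_excess n"
    by (simp add: sum_sample_space QG_pmf_def mean_exp_neg_excess_def sum_distrib_left mult_ac)
  finally show ?thesis by simp
qed

end

context ising_er
begin

lemma beta_kappa_less_one: "\<beta> * \<kappa> < 1"
proof -
  have "\<beta> * t < \<theta>" using theta_eq B_pos by simp
  then show ?thesis using theta_pos by (simp add: \<kappa>_def field_simps)
qed

text \<open>The choice \<open>\<delta> = (1 - \<beta>\<kappa>)/4\<close> keeps \<open>\<gamma> = \<beta>(1+\<delta>)\<^sup>2/2\<close> below the threshold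
  \<open>1/(2\<kappa>)\<close> of the sub-Gaussian moment bound; here \<open>\<beta>t < \<theta>\<close>, i.e. \<open>B > 0\<close>, is used.\<close>
lemma mean_exp_excess_bounds:
  obtains Cp N0 Cm where "0 < Cp"
    "\<And>n. N0 \<le> n \<Longrightarrow> mean_exp_excess n \<le> exp (- (\<beta> * real n * t^2 / 2)) * Cp"
    "\<And>n. N0 \<le> n \<Longrightarrow> mean_exp_neg_excess n \<le> exp (\<beta> * real n * t^2 / 2) * Cm"
proof
  define r where "r = \<beta> * \<kappa>"
  have r: "0 < r" "r < 1" using beta_kappa_less_one beta_pos kappa_pos by (auto simp: r_def)
  define \<delta> where "\<delta> = (1 - r) / 4"
  have \<delta>: "0 < \<delta>" "\<delta> \<le> 1" using r by (auto simp: \<delta>_def)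
  define \<gamma> where "\<gamma> = \<beta> * (1 + \<delta>)^2 / 2"
  have \<gamma>: "0 \<le> \<gamma>" using beta_pos by (simp add: \<gamma>_def)
  have "r * (1 + \<delta>)^2 \<le> r * (1 + 3 * \<delta>)"
    using \<delta> r by (intro mult_left_mono) (auto simp: power2_eq_square algebra_simps mult_left_le)
  also have "\<dots> < 1"
    using r mult_pos_pos[of "1 - r" "4 - 3 * r"] by (simp add: \<delta>_def field_simps)
  finally have \<gamma>\<kappa>: "2 * \<gamma> * \<kappa> < 1" by (simp add: \<gamma>_def r_def algebra_simps)
  define N0 where "N0 = max 2 (max (nat \<lceil>\<beta> / p\<rceil> + 1) (nat \<lceil>(1 + \<delta>) / \<delta>\<rceil>))"
  define Cp where "Cp = exp (\<beta> * (1 + 1/\<delta>) + \<beta> + \<beta>^2 / p) * (4 * exp (shell_const \<gamma>) / (1 - exp (-1)))"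
  show "0 < Cp" by (simp add: Cp_def)
  fix n assume n: "N0 \<le> n"
  then have n2: "2 \<le> n" by (simp add: N0_def)
  have "\<beta> / p \<le> real n - 1" using n by (simp add: N0_def) linarith
  then have small: "\<beta> \<le> (real n - 1) * p" using p_pos by (simp add: field_simps)
  have "(1 + \<delta>) / \<delta> \<le> real n" using n by (simp add: N0_def)
  then have "1 + \<delta> \<le> \<delta> * real n" using \<delta> by (simp add: field_simps)
  then have "mean_exp_excess n \<le> exp (- (\<beta> * real n * t^2 / 2) + (\<beta> * (1 + 1/\<delta>) + \<beta> + \<beta>^2 / p))
              * (\<Sum>x\<in>spins n. Q_pmf n t x * exp (\<gamma> * (deviation n x)^2 / real n))"
    using mean_exp_excess_le[OF n2 small \<delta>(1)] by (simp add: \<gamma>_def)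
  also have "\<dots> \<le> exp (- (\<beta> * real n * t^2 / 2) + (\<beta> * (1 + 1/\<delta>) + \<beta> + \<beta>^2 / p))
              * (4 * exp (shell_const \<gamma>) / (1 - exp (-1)))"
    using exp_quad_moment_le[OF \<gamma> \<gamma>\<kappa>] n2 by (intro mult_left_mono) auto
  also have "\<dots> = exp (- (\<beta> * real n * t^2 / 2)) * Cp"
    unfolding Cp_def by (simp only: exp_add mult.assoc)
  finally show "mean_exp_excess n \<le> exp (- (\<beta> * real n * t^2 / 2)) * Cp" .
  show "mean_exp_neg_excess n \<le> exp (\<beta> * real n * t^2 / 2) * exp (\<beta> + \<beta>^2 / p)"
    using mean_exp_neg_excess_le[OF n2 small] by (simp add: exp_add[symmetric] add.assoc)
qed

lemma likelihood_ratio_tail_le_inv_sqrt: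
  obtains N0 C where
    "\<And>n K. N0 \<le> n \<Longrightarrow> 0 < K \<Longrightarrow>
       (\<Sum>\<omega>\<in>{\<omega>\<in>sample_space n. K < likelihood_ratio n \<omega>}. QG_pmf n p t \<omega>) \<le> C / sqrt K"
proof -
  obtain Cp N0 Cm where Cp: "0 < Cp"
    and plus: "\<And>n. N0 \<le> n \<Longrightarrow> mean_exp_excess n \<le> exp (- (\<beta> * real n * t^2 / 2)) * Cp"
    and minus: "\<And>n. N0 \<le> n \<Longrightarrow> mean_exp_neg_excess n \<le> exp (\<beta> * real n * t^2 / 2) * Cm"
    by (rule mean_exp_excess_bounds) auto
  have "(\<Sum>\<omega>\<in>{\<omega>\<in>sample_space n. K < likelihood_ratio n \<omega>}. QG_pmf n p t \<omega>) \<le> (1 + Cm * Cp) / sqrt K"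
    if n: "N0 \<le> n" and K: "0 < K" for n K
  proof -
    define e where "e = exp (\<beta> * real n * t^2 / 2)"
    have e: "0 < e" by (simp add: e_def)
    define a where "a = sqrt K * Cp / e"
    have a: "0 < a" using K Cp e by (simp add: a_def)
    have "(\<Sum>\<omega>\<in>{\<omega>\<in>sample_space n. K < likelihood_ratio n \<omega>}. QG_pmf n p t \<omega>)
          \<le> mean_exp_excess n / a + mean_exp_neg_excess n * a / K"
      by (rule likelihood_ratio_tail_le[OF K a])
    also have "\<dots> \<le> Cp / e / a + e * Cm * a / K"
      using plus[OF n] minus[OF n] a K
      by (intro add_mono divide_right_mono mult_right_mono) (auto simp: e_def exp_minus field_simps)
    also have "\<dots> = (1 + Cm * Cp) / sqrt K"
      using K Cp e by (simp add: a_def field_simps)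
    finally show ?thesis .
  qed
  then show ?thesis using that by blast
qed

lemma QG_le_mult_P_er_plus_inv_sqrt:
  obtains N0 C where "\<And>n K E. N0 \<le> n \<Longrightarrow> 0 < K \<Longrightarrow> QG n p t E \<le> K * P_er n p \<beta> B E + C / sqrt K"
proof -
  obtain N0 C where "\<And>n K. N0 \<le> n \<Longrightarrow> 0 < K \<Longrightarrow>
       (\<Sum>\<omega>\<in>{\<omega>\<in>sample_space n. K < likelihood_ratio n \<omega>}. QG_pmf n p t \<omega>) \<le> C / sqrt K"
    by (rule likelihood_ratio_tail_le_inv_sqrt) auto
  with QG_le_mult_P_er_plus_tail that show ?thesis by (meson add_left_mono order_trans)
qed

end

lemma tendsto_zero_if_le_mult_plus_inv_sqrt:
  fixes q r :: "nat \<Rightarrow> real"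
  assumes q: "\<And>n. 0 \<le> q n"
    and le: "\<And>n K. N0 \<le> n \<Longrightarrow> 0 < K \<Longrightarrow> q n \<le> K * r n + C / sqrt K"
    and r: "r \<longlonglongrightarrow> 0"
  shows "q \<longlonglongrightarrow> 0"
proof (rule LIMSEQ_I)
  fix \<epsilon> :: real assume "0 < \<epsilon>"
  define M where "M = max C 1"
  define K where "K = (2 * M / \<epsilon>)^2"
  have M: "0 < M" "C \<le> M" by (auto simp: M_def)
  have K: "0 < K" and sqrt_K: "sqrt K = 2 * M / \<epsilon>"
    using \<open>0 < \<epsilon>\<close> M by (simp_all add: K_def)
  have "C / sqrt K \<le> M / sqrt K"
    using M K by (simp add: divide_right_mono)
  also have "\<dots> = \<epsilon> / 2" using M \<open>0 < \<epsilon>\<close> by (simp add: sqrt_K)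
  finally have C: "C / sqrt K \<le> \<epsilon> / 2" .
  obtain N1 where N1: "\<And>n. N1 \<le> n \<Longrightarrow> norm (r n) < \<epsilon> / (2 * K)"
    using LIMSEQ_D[OF r, of "\<epsilon> / (2 * K)"] \<open>0 < \<epsilon>\<close> K by auto
  have "norm (q n - 0) < \<epsilon>" if "max N0 N1 \<le> n" for n
  proof -
    have "K * r n < K * (\<epsilon> / (2 * K))"
      using N1[of n] that K by (intro mult_strict_left_mono) auto
    then have "K * r n < \<epsilon> / 2" using K by simp
    moreover have "q n \<le> K * r n + C / sqrt K" using le[OF _ K, of n] that by simp
    ultimately have "q n < \<epsilon>" using C by linarith
    then show ?thesis using q[of n] by simp
  qed
  then show "\<exists>N. \<forall>n\<ge>N. norm (q n - 0) < \<epsilon>" by blast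
qed

lemma contiguity:
  assumes "0 < p" "p \<le> 1" "0 < t" "(\<beta>, B) \<in> Theta_t t" "(\<lambda>n. P_er n p \<beta> B (E n)) \<longlonglongrightarrow> 0"
  shows "(\<lambda>n. QG n p t (E n)) \<longlonglongrightarrow> 0"
proof -
  have "0 < \<beta>" "0 < B" "t = tanh (\<beta> * t + B)" using assms(4) by (auto simp: Theta_t_def)
  with assms interpret ising_er "\<beta> * t + B" t p \<beta> B
    by unfold_locales (auto intro: add_pos_pos)
  obtain N0 C where "\<And>n K E. N0 \<le> n \<Longrightarrow> 0 < K \<Longrightarrow> QG n p t E \<le> K * P_er n p \<beta> B E + C / sqrt K"
    by (rule QG_le_mult_P_er_plus_inv_sqrt) auto
  then show ?thesis
    using assms(5) by (rule tendsto_zero_if_le_mult_plus_inv_sqrt[rotated])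
      (auto simp: QG_def prob_of_def intro!: sum_nonneg QG_pmf_nonneg)
qed

lemma QG_UNIV:
  assumes "0 < t" "t < 1"
  shows "QG n p t UNIV = 1"
proof -
  obtain \<theta> where "tanh \<theta> = t" using tanh_surj_unit_interval[OF assms] by blast
  then have "(\<Sum>x\<in>spins n. Q_pmf n t x) = 1" using sum_Q_pmf by blast
  then show ?thesis
    by (simp add: QG_def prob_of_def sum_sample_space QG_pmf_def sum_er_pmf
        flip: sum_distrib_left sum_distrib_right)
qed

lemma QG_Un_le:
  assumes "0 \<le> p" "p \<le> 1" "\<bar>t\<bar> \<le> 1"
  shows "QG n p t (E1 \<union> E2) \<le> QG n p t E1 + QG n p t E2"
  unfolding QG_def prob_of_def Int_Un_distrib2
  using assms by (intro sum_Un_le) (auto simp: QG_pmf_def er_pmf_nonneg Q_pmf_nonneg)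

lemma Theta_t_two_points:
  fixes t :: real assumes "0 < t" "t < 1"
  obtains q1 q2 where "q1 \<in> Theta_t t" "q2 \<in> Theta_t t" "q1 \<noteq> q2"
proof -
  obtain \<theta> where \<theta>: "0 < \<theta>" "tanh \<theta> = t" using tanh_surj_unit_interval[OF assms] by blast
  show thesis
  proof (rule that)
    show "(\<theta> / (2 * t), \<theta> / 2) \<in> Theta_t t" "(\<theta> / (3 * t), 2 * \<theta> / 3) \<in> Theta_t t"
      using \<theta> assms by (simp_all add: Theta_t_def field_simps)
    show "(\<theta> / (2 * t), \<theta> / 2) \<noteq> (\<theta> / (3 * t), 2 * \<theta> / 3)" using \<theta> by simp
  qed
qed

text \<open>Both consistency requirements would force the estimator into disjoint balls with
  \<open>P_er\<close>-probability tending to one; contiguity transfers this to the single law \<open>Q\<^sub>n \<times> G(n,p)\<close>.\<close>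
lemma not_consistent_at_two_points:
  assumes "0 < p" "p \<le> 1" "0 < t" "t < 1" "q1 \<in> Theta_t t" "q2 \<in> Theta_t t" "q1 \<noteq> q2"
  shows "\<not> (consistent_at p est (fst q1) (snd q1) \<and> consistent_at p est (fst q2) (snd q2))"
proof
  assume est: "consistent_at p est (fst q1) (snd q1) \<and> consistent_at p est (fst q2) (snd q2)"
  define \<epsilon> where "\<epsilon> = dist q1 q2 / 3"
  have "0 < \<epsilon>" using assms(7) by (simp add: \<epsilon>_def)
  define E where "E q n = {\<omega>. \<epsilon> < dist (est n \<omega>) q}" for q n
  have QG_E: "(\<lambda>n. QG n p t (E q n)) \<longlonglongrightarrow> 0" if "q \<in> {q1, q2}" for q
  proof -
    have "q \<in> Theta_t t" "consistent_at p est (fst q) (snd q)" using that assms est by auto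
    then show ?thesis
      using contiguity[OF assms(1-3), of "fst q" "snd q" "E q"] \<open>0 < \<epsilon>\<close>
      by (simp add: consistent_at_def E_def)
  qed
  have "E q1 n \<union> E q2 n = UNIV" for n
  proof -
    have "\<omega> \<in> E q1 n \<union> E q2 n" for \<omega>
    proof (rule ccontr)
      assume "\<omega> \<notin> E q1 n \<union> E q2 n"
      then have "dist q1 q2 \<le> 2 * \<epsilon>"
        using dist_triangle2[of q1 q2 "est n \<omega>"] by (auto simp: E_def dist_commute)
      then show False using \<open>0 < \<epsilon>\<close> by (simp add: \<epsilon>_def)
    qed
    then show ?thesis by blast
  qed
  then have "1 \<le> QG n p t (E q1 n) + QG n p t (E q2 n)" for n
    using QG_Un_le[of p t n "E q1 n" "E q2 n"] QG_UNIV[OF assms(3,4)] assms(1,2,3,4) by simp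
  moreover have "(\<lambda>n. QG n p t (E q1 n) + QG n p t (E q2 n)) \<longlonglongrightarrow> 0 + 0"
    using QG_E by (intro tendsto_add) auto
  ultimately have "1 \<le> (0::real) + 0"
    by (intro LIMSEQ_le_const[of _ "0 + 0" 1]) auto
  then show False by simp
qed

theorem theorem4:
  fixes p t :: real
  assumes "0 < p" "p \<le> 1" "0 < t" "t < 1"
  shows "(\<forall>(\<beta>, B) \<in> Theta_t t. \<forall>E :: nat \<Rightarrow> ((nat \<Rightarrow> real) \<times> (nat \<times> nat) set) set.
            (\<lambda>n. P_er n p \<beta> B (E n)) \<longlonglongrightarrow> 0 \<longrightarrow> (\<lambda>n. QG n p t (E n)) \<longlonglongrightarrow> 0)
       \<and> \<not> (\<exists>est. \<forall>(\<beta>, B) \<in> Theta_t t. consistent_at p est \<beta> B)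
       \<and> \<not> (\<exists>est. \<forall>\<beta> B. \<beta> > 0 \<and> B \<noteq> 0 \<longrightarrow> consistent_at p est \<beta> B)"
proof -
  obtain q1 q2 where q: "q1 \<in> Theta_t t" "q2 \<in> Theta_t t" "q1 \<noteq> q2"
    using Theta_t_two_points[OF assms(3,4)] by blast
  have no_est: "\<not> (\<forall>(\<beta>, B) \<in> Theta_t t. consistent_at p est \<beta> B)" for est
    using not_consistent_at_two_points[OF assms q, of est] q(1,2) by (auto simp: case_prod_beta)
  moreover have "Theta_t t \<subseteq> {(\<beta>, B). \<beta> > 0 \<and> B \<noteq> 0}" by (auto simp: Theta_t_def)
  ultimately show ?thesis
    using contiguity[OF assms(1-3)] by blast
qed

end
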